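(* Suppose Assumption R holds with alternative (4)(i) and Assumption G holds. Fix $k\ge1$ and $\epsilon\in(0,1)$, and let $J_I^{(k)}=1-1(F_\emptyset^{(k,\epsilon)})$, with $I$ uniform on $V_n$. Then, as $n\to\infty$, $$\Big(\mathbb{E}_n\Big[\Big(J_I^{(k)}\sigma_-(\mathbf{X}_I)\sum_{j\to I}\sigma_+(\mathbf{X}_j)\Big)^p\Big]\Big)^{1/p}+\Big(\mathbb{E}_n\Big[\Big(J_I^{(k)}\sigma_-(\mathbf{X}_I)\sum_{j\to I}|g(0,\mathbf{X}_j)|\Big)^p\Big]\Big)^{1/p}\xrightarrow{P}0.$$
   Context: Setting. Let $\mathcal{S}'$ be a separable metric space with metric $\rho'$, let $\mathcal{S}=\mathbb{N}\times\mathbb{N}\times\mathcal{S}'$, and for $\mathbf{x}=(d^-,d^+,\mathbf{a}),\tilde{\mathbf{x}}=(\tilde d^-,\tilde d^+,\tilde{\mathbf{a}})\in\mathcal{S}$ put $\rho(\mathbf{x},\tilde{\mathbf{x}})=|d^--\tilde d^-|+|d^+-\tilde d^+|+\rho'(\mathbf{a},\tilde{\mathbf{a}})$. For each $n\ge1$, $G(V_n,E_n)$ is a random directed graph (multigraph allowed) on $V_n=\{1,\dots,n\}$; $j\to i$ means there is an edge from $j$ to $i$ (collections/sums over $j\to i$ run over inbound edges, with multiplicity). Vertex $i$ has an attribute $\mathbf{a}_i\in\mathcal{S}'$, in-degree $D_i^-$, out-degree $D_i^+$, and mark $\mathbf{X}_i=(D_i^-,D_i^+,\mathbf{a}_i)\in\mathcal{S}$.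 Let $\mathscr{F}_n=\sigma(\mathbf{a}_i:1\le i\le n)$, $\mathbb{P}_n(\cdot)=P(\cdot\mid\mathscr{F}_n)$, $\mathbb{E}_n[\cdot]=E[\cdot\mid\mathscr{F}_n]$, $\mathscr{G}_n=\sigma(\mathscr{F}_n,G(V_n,E_n))$, $\mathbf{P}_n(\cdot)=P(\cdot\mid\mathscr{G}_n)$, $\mathbf{E}_n[\cdot]=E[\cdot\mid\mathscr{G}_n]$, and $\boldsymbol{G}=\{G(V_n,E_n):n\ge1\}$. The recursion. Fix $p\in[1,\infty)$, a measurable $g:\mathbb{R}\times\mathcal{S}\to\mathbb{R}$, and a measurable map $\Phi$ assigning a real number $\Phi(\mathbf{x},z,\{(v_j,x_j):1\le j\le d^-\})$ to a mark $\mathbf{x}=(d^-,d^+,\mathbf{a})\in\mathcal{S}$, a vertex-noise value $z$ and $d^-$ pairs (real value $v_j$, edge-noise value $x_j$). Let $\{\zeta_i^{(k)}:i\ge1,k\ge0\}$ and $\{\xi_{j,i}^{(k)}:i,j\ge1,k\ge0\}$ be two families of i.i.d. random variables, independent of each other and of the graphs and attributes. A generic noise vector $(\zeta,\{\xi_j\}_{j\ge1})$ consists of independent variables with $\zeta\stackrel{d}{=}\zeta_1^{(0)}$ and $\xi_j\stackrel{d}{=}\xi_{1,1}^{(0)}$. Let $R_i^{(0)}$, $i\in V_n$, be i.i.d. with law $\mu_0$, independent of everything else, and for $k\ge0$, $R_i^{(k+1)}=\Phi(\mathbf{X}_i,\zeta_i^{(k)},\{g(R_j^{(k)},\mathbf{X}_j),\xi_{j,i}^{(k)}:j\to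 i\})$, $i\in V_n$; $\mathbf{R}^{(k)}=(R_1^{(k)},\dots,R_n^{(k)})$. For matrices, $\|\cdot\|_p$ is the operator norm induced by the $\ell_p$ norm. Assumption R. There exist continuous $\sigma_-,\sigma_+,\beta:\mathcal{S}\to[0,\infty)$ such that, for every $\mathbf{x}=(d^-,d^+,\mathbf{a})\in\mathcal{S}$, with $(\zeta,\{\xi_j\})$ a generic noise vector: (1) for all $v,\tilde v\in\mathbb{R}^{d^-}$: $(E|\Phi(\mathbf{x},\zeta,\{v_j,\xi_j\}_{j\le d^-})-\Phi(\mathbf{x},\zeta,\{\tilde v_j,\xi_j\}_{j\le d^-})|^p)^{1/p}\le\sigma_-(\mathbf{x})\sum_{j=1}^{d^-}|v_j-\tilde v_j|$; (2) $|g(r,\mathbf{x})-g(\tilde r,\mathbf{x})|\le\sigma_+(\mathbf{x})|r-\tilde r|$ for all $r,\tilde r\in\mathbb{R}$; (3) for all $v\in\mathbb{R}^{d^-}$: $(E|\Phi(\mathbf{x},\zeta,\{v_j,\xi_j\}_{j\le d^-})|^p)^{1/p}\le\sigma_-(\mathbf{x})\sum_{j=1}^{d^-}|v_j|+\beta(\mathbf{x})$; (4)(i) there are $K,K_0<\infty$ such that a.s. for every $n$ the $n\times n$ matrices $C$, $C^{(0)}$ with entries $C_{i,j}=\sigma_-(\mathbf{X}_i)\sigma_+(\mathbf{X}_j)1(j\to i)$ and $C^{(0)}_{i,j}=\sigma_-(\mathbf{X}_i)|g(0,\mathbf{X}_j)|1(j\to i)$ satisfy $\|C\|_p\le K$,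 $\|C^{(0)}\|_p\le K_0$; (5) there are constants $H,Q,\alpha,\gamma>0$ such that for all $v\in\mathbb{R}^{d^-}$, $r\in\mathbb{R}$, $\epsilon\in(0,1)$ and $\tilde{\mathbf{x}}\in\mathcal{S}$ with $\rho(\mathbf{x},\tilde{\mathbf{x}})\le\epsilon$: $(E|\Phi(\mathbf{x},\zeta,\{v_j,\xi_j\})-\Phi(\tilde{\mathbf{x}},\zeta,\{v_j,\xi_j\})|^p)^{1/p}\le H(1\vee(\sigma_-(\mathbf{x})\sum_j|v_j|+\beta(\mathbf{x})))\rho(\mathbf{x},\tilde{\mathbf{x}})^\alpha$ and $|g(r,\mathbf{x})-g(r,\tilde{\mathbf{x}})|\le Q(1\vee\sigma_+(\mathbf{x})|r|)\rho(\mathbf{x},\tilde{\mathbf{x}})^\gamma$. Delayed marked Galton–Watson tree. Let $\mathcal{U}=\bigcup_{k\ge0}\mathbb{N}_+^k$ with $\mathbb{N}_+^0=\{\emptyset\}$ (the root); $(\mathbf{i},j)$ is concatenation, and $j$ stands for $(j)$. Let $\{(\mathcal{N}_\mathbf{i},\boldsymbol{X}_\mathbf{i}):\mathbf{i}\in\mathcal{U}\}$ be independent, $\mathcal{N}_\mathbf{i}\in\mathbb{N}$, $\boldsymbol{X}_\mathbf{i}\in\mathcal{S}$ with first coordinate equal to $\mathcal{N}_\mathbf{i}$, the vectors with $\mathbf{i}\ne\emptyset$ i.i.d. (the root's may have a different law). $\mathcal{A}_0=\{\emptyset\}$, $\mathcal{A}_k=\{(\mathbf{i},j):\mathbf{i}\in\mathcal{A}_{k-1},1\le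 j\le\mathcal{N}_\mathbf{i}\}$, $\mathcal{T}^{(k)}=\bigcup_{r=0}^k\mathcal{A}_r$. Strong coupling. For $I\in V_n$ let $A_0=\{I\}$, $A_r$ be the set of vertices having a directed path of length $r$ to $I$, and $\mathcal{G}_I^{(k)}$ the subgraph on $\bigcup_{r\le k}A_r$. $\boldsymbol{G}$ admits a strong coupling if for each $n$ and $I$ one can construct, on the same probability space, a delayed marked Galton–Watson tree (with law not depending on $n$) whose root corresponds to $I$, such that, writing $\mathcal{G}_I^{(k)}\simeq\mathcal{T}^{(k)}$ for graph isomorphism via a bijection with node $\mathbf{i}$ corresponding to vertex $\theta(\mathbf{i})$ ($\theta(\emptyset)=I$), and taking $I$ uniform on $V_n$, for each fixed $k\ge1$ and $\epsilon\in(0,1)$, as $n\to\infty$: $\mathbb{P}_n(\mathcal{G}_I^{(k)}\not\simeq\mathcal{T}^{(k)})\xrightarrow{P}0$, $\mathbb{E}_n[\rho(\mathbf{X}_I,\boldsymbol{X}_\emptyset)]\xrightarrow{P}0$, and $\mathbb{P}_n(\{\mathcal{G}_I^{(k)}\simeq\mathcal{T}^{(k)}\}\cap\bigcap_{r=0}^k\bigcap_{\mathbf{i}\in\mathcal{A}_r}\{\rho(\mathbf{X}_{\theta(\mathbf{i})},\boldsymbol{X}_\mathbf{i})\le\epsilon\})\xrightarrow{P}1$. The event $F_\emptyset^{(k,\epsilon)}$ is $\{\mathcal{G}_I^{(k)}\simeq\mathcal{T}^{(k)}\}\cap\bigcap_{s=0}^k\bigcap_{\mathbf{i}\in\mathcal{A}_s}\{\rho(\mathbf{X}_{\theta(\mathbf{i})},\boldsymbol{X}_\mathbf{i})\le\epsilon\}$.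 Wasserstein distance. $d_p(\mu,\nu)=\inf\{(E|X-Y|^p)^{1/p}:\mathrm{law}(X)=\mu,\mathrm{law}(Y)=\nu\}$; $X_n\xrightarrow{d_p}X$ means the conditional law $\nu_n$ of $X_n$ given $\mathscr{F}_n$ satisfies $d_p(\nu_n,\mathrm{law}(X))\xrightarrow{P}0$. Assumption G. $\boldsymbol{G}$ admits a strong coupling, and, for the $p$ of Assumption R: $E[(\mathcal{N}_\emptyset\sigma_-(\boldsymbol{X}_\emptyset))^p+\beta(\boldsymbol{X}_\emptyset)^p]<\infty$; $E[(\mathcal{N}_1\sigma_-(\boldsymbol{X}_1)\sigma_+(\boldsymbol{X}_1))^p+(\sigma_+(\boldsymbol{X}_1)\beta(\boldsymbol{X}_1))^p+\sigma_+(\boldsymbol{X}_1)^p+|g(0,\boldsymbol{X}_1)|^p]<\infty$; and, with $f_*(\mathbf{x})=\sigma_-(\mathbf{x})d^-$ for $\mathbf{x}=(d^-,d^+,\mathbf{a})$ and $I$ uniform on $V_n$, $f_*(\mathbf{X}_I)\xrightarrow{d_p}f_*(\boldsymbol{X}_\emptyset)$ and $\beta(\mathbf{X}_I)\xrightarrow{d_p}\beta(\boldsymbol{X}_\emptyset)$. *)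

theory Defs
  imports "HOL-Probability.Probability"
begin

type_synonym 'a mark = "nat \<times> nat \<times> 'a"

definition rho :: "'a::metric_space mark \<Rightarrow> 'a mark \<Rightarrow> real" where
  "rho x y = (case x of (dm, dp, a) \<Rightarrow> case y of (em, ep, b) \<Rightarrow>
      \<bar>real dm - real em\<bar> + \<bar>real dp - real ep\<bar> + dist a b)"

definition indeg_of :: "'a mark \<Rightarrow> nat" where "indeg_of x = fst x"

definition enn_root :: "real \<Rightarrow> ennreal \<Rightarrow> ennreal" where
  "enn_root p x = (if x = \<infinity> then \<infinity> else ennreal (enn2real x powr (1 / p)))"

text \<open>Outer probability, used so that convergence in probability makes sense
  without separate measurability assumptions.\<close>
definition outer_prob :: "'w measure \<Rightarrow> 'w set \<Rightarrow> ennreal" where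
  "outer_prob M S = (INF A \<in> {A \<in> sets M. S \<subseteq> A}. emeasure M A)"

definition conv_prob :: "'w measure \<Rightarrow> (nat \<Rightarrow> 'w \<Rightarrow> real) \<Rightarrow> real \<Rightarrow> bool" where
  "conv_prob M X c \<longleftrightarrow> (\<forall>\<delta>>0. ((\<lambda>n. outer_prob M {\<omega> \<in> space M. \<delta> < \<bar>X n \<omega> - c\<bar>}) \<longlongrightarrow> 0) sequentially)"

definition conv_prob_enn0 :: "'w measure \<Rightarrow> (nat \<Rightarrow> 'w \<Rightarrow> ennreal) \<Rightarrow> bool" where
  "conv_prob_enn0 M X \<longleftrightarrow> (\<forall>\<delta>::real>0. ((\<lambda>n. outer_prob M {\<omega> \<in> space M. ennreal \<delta> < X n \<omega>}) \<longlongrightarrow> 0) sequentially)"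

definition opnorm_p :: "real \<Rightarrow> nat \<Rightarrow> (nat \<Rightarrow> nat \<Rightarrow> real) \<Rightarrow> ennreal" where
  "opnorm_p p n A = (SUP x \<in> {x :: nat \<Rightarrow> real. (\<Sum>j\<in>{1..n}. \<bar>x j\<bar> powr p) \<le> 1}.
      ennreal ((\<Sum>i\<in>{1..n}. \<bar>\<Sum>j\<in>{1..n}. A i j * x j\<bar> powr p) powr (1 / p)))"

definition couplings :: "real measure \<Rightarrow> real measure \<Rightarrow> (real \<times> real) measure set" where
  "couplings \<mu> \<nu> = {\<pi>. prob_space \<pi> \<and> sets \<pi> = sets (borel \<Otimes>\<^sub>M borel)
      \<and> distr \<pi> borel fst = \<mu> \<and> distr \<pi> borel snd = \<nu>}"

definition wasserstein :: "real \<Rightarrow> real measure \<Rightarrow> real measure \<Rightarrow> ennreal" where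
  "wasserstein p \<mu> \<nu> = enn_root p (INF \<pi> \<in> couplings \<mu> \<nu>.
      \<integral>\<^sup>+ z. ennreal (\<bar>fst z - snd z\<bar> powr p) \<partial>\<pi>)"

text \<open>edges n j i \<omega> = number of edges from j to i in G(V_n,E_n), vertices {1..n}.\<close>

definition indeg :: "(nat \<Rightarrow> nat \<Rightarrow> nat \<Rightarrow> 'w \<Rightarrow> nat) \<Rightarrow> nat \<Rightarrow> nat \<Rightarrow> 'w \<Rightarrow> nat" where
  "indeg E n i \<omega> = (\<Sum>j\<in>{1..n}. E n j i \<omega>)"

definition outdeg :: "(nat \<Rightarrow> nat \<Rightarrow> nat \<Rightarrow> 'w \<Rightarrow> nat) \<Rightarrow> nat \<Rightarrow> nat \<Rightarrow> 'w \<Rightarrow> nat" where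
  "outdeg E n i \<omega> = (\<Sum>j\<in>{1..n}. E n i j \<omega>)"

definition gmark :: "(nat \<Rightarrow> nat \<Rightarrow> nat \<Rightarrow> 'w \<Rightarrow> nat) \<Rightarrow> (nat \<Rightarrow> nat \<Rightarrow> 'w \<Rightarrow> 'a) \<Rightarrow> nat \<Rightarrow> nat \<Rightarrow> 'w \<Rightarrow> 'a mark" where
  "gmark E attr n i \<omega> = (indeg E n i \<omega>, outdeg E n i \<omega>, attr n i \<omega>)"

definition Fn :: "'w measure \<Rightarrow> (nat \<Rightarrow> nat \<Rightarrow> 'w \<Rightarrow> 'a::topological_space) \<Rightarrow> nat \<Rightarrow> 'w measure" where
  "Fn M attr n = sigma (space M) {attr n i -` B \<inter> space M | i B. i \<in> {1..n} \<and> B \<in> sets borel}"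

text \<open>v has a directed walk of length r ending at I (equivalently, for the union over r<=k,
  a directed path of length at most k).\<close>
definition has_walk :: "(nat \<Rightarrow> nat \<Rightarrow> nat \<Rightarrow> 'w \<Rightarrow> nat) \<Rightarrow> nat \<Rightarrow> nat \<Rightarrow> nat \<Rightarrow> nat \<Rightarrow> 'w \<Rightarrow> bool" where
  "has_walk E n r v I \<omega> \<longleftrightarrow> (\<exists>f :: nat \<Rightarrow> nat. f 0 = v \<and> f r = I \<and>
      (\<forall>t\<le>r. f t \<in> {1..n}) \<and> (\<forall>t<r. 1 \<le> E n (f t) (f (Suc t)) \<omega>))"

definition nbhd :: "(nat \<Rightarrow> nat \<Rightarrow> nat \<Rightarrow> 'w \<Rightarrow> nat) \<Rightarrow> nat \<Rightarrow> nat \<Rightarrow> nat \<Rightarrow> 'w \<Rightarrow> nat set" where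
  "nbhd E n k I \<omega> = {v \<in> {1..n}. \<exists>r\<le>k. has_walk E n r v I \<omega>}"

text \<open>Ulam-Harris labels: lists of positive naturals; (i,j) = i @ [j].\<close>
definition ulam :: "nat list set" where "ulam = {u. \<forall>x\<in>set u. 1 \<le> x}"

fun tree_level :: "(nat list \<Rightarrow> nat) \<Rightarrow> nat \<Rightarrow> nat list set" where
  "tree_level N 0 = {[]}"
| "tree_level N (Suc r) = {u @ [j] | u j. u \<in> tree_level N r \<and> 1 \<le> j \<and> j \<le> N u}"

definition tree_upto :: "(nat list \<Rightarrow> nat) \<Rightarrow> nat \<Rightarrow> nat list set" where
  "tree_upto N k = (\<Union>r\<le>k. tree_level N r)"

text \<open>G_I^(k) isomorphic to T^(k) via theta (node u <-> vertex theta u), T^(k) having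
  one edge from each child u@[j] to its parent u; G_I^(k) is the induced subgraph.\<close>
definition iso_event ::
  "(nat \<Rightarrow> nat \<Rightarrow> nat \<Rightarrow> 'w \<Rightarrow> nat) \<Rightarrow> nat \<Rightarrow> nat \<Rightarrow> nat \<Rightarrow> (nat list \<Rightarrow> 'w \<Rightarrow> 'a mark)
    \<Rightarrow> (nat list \<Rightarrow> 'w \<Rightarrow> nat) \<Rightarrow> 'w \<Rightarrow> bool" where
  "iso_event E n k I Xt \<theta> \<omega> \<longleftrightarrow>
     (let T = tree_upto (\<lambda>u. fst (Xt u \<omega>)) k in
       \<theta> [] \<omega> = I \<and> bij_betw (\<lambda>u. \<theta> u \<omega>) T (nbhd E n k I \<omega>) \<and>
       (\<forall>u\<in>T. \<forall>v\<in>T. E n (\<theta> u \<omega>) (\<theta> v \<omega>) \<omega> = (if \<exists>j. u = v @ [j] then 1 else 0)))"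

definition F_event ::
  "(nat \<Rightarrow> nat \<Rightarrow> nat \<Rightarrow> 'w \<Rightarrow> nat) \<Rightarrow> (nat \<Rightarrow> nat \<Rightarrow> 'w \<Rightarrow> 'a::metric_space) \<Rightarrow> nat \<Rightarrow> nat \<Rightarrow> real
    \<Rightarrow> nat \<Rightarrow> (nat list \<Rightarrow> 'w \<Rightarrow> 'a mark) \<Rightarrow> (nat list \<Rightarrow> 'w \<Rightarrow> nat) \<Rightarrow> 'w \<Rightarrow> bool" where
  "F_event E attr n k \<epsilon> I Xt \<theta> \<omega> \<longleftrightarrow> iso_event E n k I Xt \<theta> \<omega> \<and>
     (\<forall>u \<in> tree_upto (\<lambda>u. fst (Xt u \<omega>)) k. rho (gmark E attr n (\<theta> u \<omega>) \<omega>) (Xt u \<omega>) \<le> \<epsilon>)"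

definition noise_Lp :: "'z measure \<Rightarrow> 'x measure \<Rightarrow> nat \<Rightarrow> real \<Rightarrow> ('z \<Rightarrow> (nat \<Rightarrow> 'x) \<Rightarrow> real) \<Rightarrow> ennreal" where
  "noise_Lp Z Xi d p W = enn_root p
     (\<integral>\<^sup>+ z. ennreal (\<bar>W (fst z) (snd z)\<bar> powr p) \<partial>(Z \<Otimes>\<^sub>M PiM {..<d} (\<lambda>_. Xi)))"

text \<open>Phi(x, z, {(v_j, xi_j) : j <= d^-}) with d^- the in-degree coordinate of x.\<close>
definition Phi_app :: "('a mark \<Rightarrow> 'z \<Rightarrow> (real \<times> 'x) list \<Rightarrow> real) \<Rightarrow> 'a mark \<Rightarrow> nat
     \<Rightarrow> (nat \<Rightarrow> real) \<Rightarrow> 'z \<Rightarrow> (nat \<Rightarrow> 'x) \<Rightarrow> real" where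
  "Phi_app \<Phi> x d v z xs = \<Phi> x z (map (\<lambda>j. (v j, xs j)) [0..<d])"


text \<open>kappa is a (F-measurable) regular version of the conditional law given F of Y_I,
  I uniform on {1..n} and independent of everything else.\<close>
definition cond_law_mix :: "'w measure \<Rightarrow> 'w measure \<Rightarrow> nat \<Rightarrow> (nat \<Rightarrow> 'w \<Rightarrow> real)
     \<Rightarrow> ('w \<Rightarrow> real measure) \<Rightarrow> bool" where
  "cond_law_mix M F n Y \<kappa> \<longleftrightarrow>
     (\<forall>\<omega>\<in>space M. prob_space (\<kappa> \<omega>) \<and> sets (\<kappa> \<omega>) = sets borel) \<and>
     (\<forall>B\<in>sets borel. (\<lambda>\<omega>. emeasure (\<kappa> \<omega>) B) \<in> borel_measurable F \<and>
        (AE \<omega> in M. emeasure (\<kappa> \<omega>) B =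
           ennreal (1 / real n) * (\<Sum>i\<in>{1..n}. nn_cond_exp M F (indicator {\<omega>\<in>space M. Y i \<omega> \<in> B}) \<omega>)))"

definition dp_conv :: "'w measure \<Rightarrow> (nat \<Rightarrow> 'w measure) \<Rightarrow> real \<Rightarrow> (nat \<Rightarrow> nat \<Rightarrow> 'w \<Rightarrow> real)
     \<Rightarrow> real measure \<Rightarrow> bool" where
  "dp_conv M F p Y L \<longleftrightarrow> (\<exists>\<kappa> :: nat \<Rightarrow> 'w \<Rightarrow> real measure.
     (\<forall>n\<ge>1. cond_law_mix M (F n) n (Y n) (\<kappa> n)) \<and>
     conv_prob_enn0 M (\<lambda>n \<omega>. wasserstein p (\<kappa> n \<omega>) L))"

end

theory Submission
  imports Defs
begin

text \<open>Write \<open>Y\<^sub>i = \<sigma>\<^sub>-(X\<^sub>i) \<Sum>\<^sub>j\<^sub>\<rightarrow>\<^sub>i \<phi>(X\<^sub>j)\<close> with \<open>\<phi>\<close> either \<open>\<sigma>\<^sub>+\<close> or \<open>|g(0,\<cdot>)|\<close>, and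
  \<open>J\<^sub>i\<close> for the indicator that the coupling fails at \<open>i\<close>. Splitting the in-neighbours at a level
  \<open>m\<close> gives \<open>Y\<^sub>i \<le> m f\<^sub>*(X\<^sub>i) + H\<^sub>i\<close>, where \<open>H\<^sub>i\<close> only involves neighbours with \<open>\<phi> > m\<close>. Hence
  \<open>(J\<^sub>i Y\<^sub>i)\<^sup>p\<close> is dominated by three pieces: \<open>m\<^sup>p A\<^sup>p J\<^sub>i\<close>, whose averaged conditional
  expectation vanishes by the strong coupling; \<open>m\<^sup>p f\<^sub>*(X\<^sub>i)\<^sup>p \<one>{f\<^sub>* > A}\<close>, which the \<open>d\<^sub>p\<close>-convergence
  of \<open>f\<^sub>*(X\<^sub>I)\<close> bounds by a transport cost plus a tail of the limit law; and \<open>H\<^sub>i\<^sup>p\<close>, whose sum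
  over \<open>i\<close> is at most \<open>K\<^sup>p\<close> times the number of vertices with \<open>\<phi> > m\<close>, by the operator-norm bound.
  Such a vertex is either far from its coupled tree root or has its root near \<open>{\<phi> > m}\<close>, an
  event of small probability for large \<open>m\<close> by local boundedness of \<open>\<phi>\<close>. Choosing first \<open>m\<close>,
  then \<open>A\<close> large gives the claim.\<close>

section \<open>Convergence in probability\<close>

lemma outer_prob_le_emeasure: "A \<in> sets M \<Longrightarrow> S \<subseteq> A \<Longrightarrow> outer_prob M S \<le> emeasure M A"
  unfolding outer_prob_def by (rule INF_lower) auto

lemma outer_prob_mono: "S \<subseteq> T \<Longrightarrow> outer_prob M S \<le> outer_prob M T"
  unfolding outer_prob_def by (rule INF_superset_mono) auto

lemma outer_prob_Un:
  assumes "finite_measure M"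
  shows "outer_prob M (S \<union> T) \<le> outer_prob M S + outer_prob M T"
proof (rule ennreal_le_epsilon)
  fix e :: real assume fin: "outer_prob M S + outer_prob M T < top" and e: "0 < e"
  have "outer_prob M S < outer_prob M S + ennreal (e/2)"
    using fin e by (simp add: ennreal_add_left_cancel_less less_top[symmetric])
  then obtain A where A: "A \<in> sets M" "S \<subseteq> A" "emeasure M A < outer_prob M S + ennreal (e/2)"
    unfolding outer_prob_def[of M S] INF_less_iff by auto
  have "outer_prob M T < outer_prob M T + ennreal (e/2)"
    using fin e by (simp add: ennreal_add_left_cancel_less less_top[symmetric])
  then obtain B where B: "B \<in> sets M" "T \<subseteq> B" "emeasure M B < outer_prob M T + ennreal (e/2)"
    unfolding outer_prob_def[of M T] INF_less_iff by auto
  have "outer_prob M (S \<union> T) \<le> emeasure M (A \<union> B)"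
    using A B by (intro outer_prob_le_emeasure) auto
  also have "\<dots> \<le> emeasure M A + emeasure M B" using A B by (intro emeasure_subadditive) auto
  also have "\<dots> \<le> (outer_prob M S + ennreal (e/2)) + (outer_prob M T + ennreal (e/2))"
    using A B by (intro add_mono) auto
  also have "\<dots> = outer_prob M S + outer_prob M T + ennreal e"
    using e by (simp add: ennreal_plus[symmetric] algebra_simps del: ennreal_plus)
  finally show "outer_prob M (S \<union> T) \<le> outer_prob M S + outer_prob M T + ennreal e" .
qed

lemma outer_prob_AE_mono:
  assumes "finite_measure M" "AE \<omega> in M. P \<omega> \<longrightarrow> Q \<omega>"
  shows "outer_prob M {\<omega>\<in>space M. P \<omega>} \<le> outer_prob M {\<omega>\<in>space M. Q \<omega>}"
proof -
  from assms(2) obtain N where N: "N \<in> null_sets M" "{\<omega>\<in>space M. \<not> (P \<omega> \<longrightarrow> Q \<omega>)} \<subseteq> N"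
    unfolding eventually_ae_filter by auto
  have "outer_prob M {\<omega>\<in>space M. P \<omega>} \<le> outer_prob M ({\<omega>\<in>space M. Q \<omega>} \<union> N)"
    using N by (intro outer_prob_mono) auto
  also have "\<dots> \<le> outer_prob M {\<omega>\<in>space M. Q \<omega>} + outer_prob M N"
    by (rule outer_prob_Un[OF assms(1)])
  also have "outer_prob M N = 0"
    using N outer_prob_le_emeasure[of N M N] by (simp add: null_sets_def)
  finally show ?thesis by simp
qed

lemma outer_prob_Markov:
  assumes "X \<in> borel_measurable M" "0 < \<delta>"
  shows "outer_prob M {\<omega> \<in> space M. ennreal \<delta> < X \<omega>} \<le> ennreal (1 / \<delta>) * (\<integral>\<^sup>+ \<omega>. X \<omega> \<partial>M)"
proof -
  have "{\<omega> \<in> space M. ennreal \<delta> < X \<omega>} \<subseteq> {\<omega> \<in> space M. 1 \<le> ennreal (1 / \<delta>) * X \<omega>}"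
  proof safe
    fix \<omega> assume "ennreal \<delta> < X \<omega>"
    hence "ennreal (1 / \<delta>) * ennreal \<delta> \<le> ennreal (1 / \<delta>) * X \<omega>" by (intro mult_left_mono) auto
    thus "1 \<le> ennreal (1 / \<delta>) * X \<omega>" using assms by (simp add: ennreal_mult[symmetric] del: ennreal_mult)
  qed
  hence "outer_prob M {\<omega> \<in> space M. ennreal \<delta> < X \<omega>} \<le> emeasure M {\<omega> \<in> space M. 1 \<le> ennreal (1 / \<delta>) * X \<omega>}"
    using assms by (intro outer_prob_le_emeasure) measurable
  also have "\<dots> \<le> ennreal (1 / \<delta>) * (\<integral>\<^sup>+ \<omega>. X \<omega> * indicator (space M) \<omega> \<partial>M)"
    using assms by (intro nn_integral_Markov_inequality) auto
  also have "(\<integral>\<^sup>+ \<omega>. X \<omega> * indicator (space M) \<omega> \<partial>M) = (\<integral>\<^sup>+ \<omega>. X \<omega> \<partial>M)"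
    by (intro nn_integral_cong) auto
  finally show ?thesis .
qed

lemma conv_prob_enn0I:
  assumes "\<And>\<delta> \<eta>. 0 < \<delta> \<Longrightarrow> 0 < \<eta> \<Longrightarrow> \<exists>N. \<forall>n\<ge>N.
     outer_prob M {\<omega> \<in> space M. ennreal \<delta> < X n \<omega>} \<le> ennreal \<eta>"
  shows "conv_prob_enn0 M X"
  unfolding conv_prob_enn0_def
proof (intro allI impI order_tendstoI)
  fix \<delta> :: real and a :: ennreal assume \<delta>: "0 < \<delta>" and a: "0 < a"
  obtain \<eta> where \<eta>: "0 < \<eta>" "ennreal \<eta> < a"
  proof (cases a)
    case (real r)
    with a show ?thesis using that[of "r/2"] by (simp add: ennreal_lessI)
  qed (use that[of 1] in simp)
  from assms[OF \<delta> \<eta>(1)] obtain N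
    where "\<forall>n\<ge>N. outer_prob M {\<omega> \<in> space M. ennreal \<delta> < X n \<omega>} \<le> ennreal \<eta>" by auto
  with \<eta> show "\<forall>\<^sub>F n in sequentially. outer_prob M {\<omega> \<in> space M. ennreal \<delta> < X n \<omega>} < a"
    unfolding eventually_sequentially by (auto intro: le_less_trans)
qed simp

lemma conv_prob_enn0D:
  assumes "conv_prob_enn0 M X" "0 < \<delta>" "0 < \<eta>"
  shows "\<exists>N. \<forall>n\<ge>N. outer_prob M {\<omega> \<in> space M. ennreal \<delta> < X n \<omega>} \<le> ennreal \<eta>"
proof -
  have "((\<lambda>n. outer_prob M {\<omega> \<in> space M. ennreal \<delta> < X n \<omega>}) \<longlongrightarrow> 0) sequentially"
    using assms unfolding conv_prob_enn0_def by auto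
  from order_tendstoD(2)[OF this, of "ennreal \<eta>"] assms(3)
  show ?thesis unfolding eventually_sequentially by (auto intro: less_imp_le)
qed

lemma conv_prob_enn0_abs_diff:
  assumes "conv_prob M X c"
  shows "conv_prob_enn0 M (\<lambda>n \<omega>. ennreal \<bar>X n \<omega> - c\<bar>)"
  using assms unfolding conv_prob_def conv_prob_enn0_def by (simp add: ennreal_less_iff)

lemma ennreal_less_enn_root_iff:
  assumes p: "0 < p" and \<delta>: "0 < \<delta>"
  shows "ennreal \<delta> < enn_root p x \<longleftrightarrow> ennreal (\<delta> powr p) < x"
proof (cases x)
  case (real r)
  have mono: "\<delta> < s \<longleftrightarrow> \<delta> powr p < s powr p" if "0 \<le> s" for s
    using that \<delta> p by (meson not_less powr_less_mono2 powr_mono2 less_imp_le)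
  have "ennreal \<delta> < enn_root p x \<longleftrightarrow> \<delta> powr p < (r powr (1/p)) powr p"
    using real \<delta> by (simp add: enn_root_def ennreal_less_iff mono)
  also have "(r powr (1/p)) powr p = r" using p real by (simp add: powr_powr)
  finally show ?thesis using real \<delta> by (simp add: ennreal_less_iff)
qed (simp add: enn_root_def)

lemma conv_prob_enn0_enn_root_iff:
  assumes p: "0 < p"
  shows "conv_prob_enn0 M (\<lambda>n \<omega>. enn_root p (X n \<omega>)) \<longleftrightarrow> conv_prob_enn0 M X"
proof -
  have "(\<forall>\<delta>::real>0. P (\<delta> powr p)) \<longleftrightarrow> (\<forall>\<delta>::real>0. P \<delta>)" for P
  proof safe
    fix \<delta> :: real assume "\<forall>\<delta>>0. P (\<delta> powr p)" "0 < \<delta>"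
    hence "P ((\<delta> powr (1/p)) powr p)" by simp
    thus "P \<delta>" using p \<open>0 < \<delta>\<close> by (simp add: powr_powr)
  qed simp
  thus ?thesis unfolding conv_prob_enn0_def by (simp add: ennreal_less_enn_root_iff[OF p])
qed

lemma conv_prob_enn0_add:
  assumes M: "finite_measure M" and X: "conv_prob_enn0 M X" and Y: "conv_prob_enn0 M Y"
  shows "conv_prob_enn0 M (\<lambda>n \<omega>. X n \<omega> + Y n \<omega>)"
proof (rule conv_prob_enn0I)
  fix \<delta> \<eta> :: real assume d: "0 < \<delta>" "0 < \<eta>"
  obtain N1 where N1: "\<forall>n\<ge>N1. outer_prob M {\<omega> \<in> space M. ennreal (\<delta>/2) < X n \<omega>} \<le> ennreal (\<eta>/2)"
    using conv_prob_enn0D[OF X, of "\<delta>/2" "\<eta>/2"] d by auto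
  obtain N2 where N2: "\<forall>n\<ge>N2. outer_prob M {\<omega> \<in> space M. ennreal (\<delta>/2) < Y n \<omega>} \<le> ennreal (\<eta>/2)"
    using conv_prob_enn0D[OF Y, of "\<delta>/2" "\<eta>/2"] d by auto
  have split: "ennreal (\<delta>/2) < x \<or> ennreal (\<delta>/2) < y" if "ennreal \<delta> < x + y" for x y
  proof (rule ccontr)
    assume "\<not> ?thesis"
    hence "x + y \<le> ennreal (\<delta>/2) + ennreal (\<delta>/2)" by (intro add_mono) auto
    with that d show False by (simp flip: ennreal_plus)
  qed
  show "\<exists>N. \<forall>n\<ge>N. outer_prob M {\<omega> \<in> space M. ennreal \<delta> < X n \<omega> + Y n \<omega>} \<le> ennreal \<eta>"
  proof (intro exI allI impI)
    fix n assume n: "max N1 N2 \<le> n"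
    have "outer_prob M {\<omega> \<in> space M. ennreal \<delta> < X n \<omega> + Y n \<omega>}
        \<le> outer_prob M ({\<omega> \<in> space M. ennreal (\<delta>/2) < X n \<omega>} \<union> {\<omega> \<in> space M. ennreal (\<delta>/2) < Y n \<omega>})"
      using split by (intro outer_prob_mono) blast
    also have "\<dots> \<le> ennreal (\<eta>/2) + ennreal (\<eta>/2)"
      using outer_prob_Un[OF M] N1 N2 n by (meson add_mono max.bounded_iff order_trans)
    also have "\<dots> = ennreal \<eta>" using d by (simp flip: ennreal_plus)
    finally show "outer_prob M {\<omega> \<in> space M. ennreal \<delta> < X n \<omega> + Y n \<omega>} \<le> ennreal \<eta>" .
  qed
qed

lemma conv_prob_enn0_cmult:
  assumes X: "conv_prob_enn0 M X" and c: "0 \<le> c"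
  shows "conv_prob_enn0 M (\<lambda>n \<omega>. ennreal c * X n \<omega>)"
proof (rule conv_prob_enn0I)
  fix \<delta> \<eta> :: real assume d: "0 < \<delta>" "0 < \<eta>"
  obtain N where N: "\<forall>n\<ge>N. outer_prob M {\<omega> \<in> space M. ennreal (\<delta> / (c + 1)) < X n \<omega>} \<le> ennreal \<eta>"
    using conv_prob_enn0D[OF X, of "\<delta> / (c + 1)" \<eta>] d c by auto
  have "ennreal (\<delta> / (c + 1)) < x" if "ennreal \<delta> < ennreal c * x" for x
  proof (rule ccontr)
    assume "\<not> ?thesis"
    hence "ennreal c * x \<le> ennreal c * ennreal (\<delta> / (c + 1))" by (intro mult_left_mono) auto
    also have "\<dots> \<le> ennreal \<delta>"
      using c d by (simp add: ennreal_mult[symmetric] field_simps del: ennreal_mult)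
    finally show False using that by simp
  qed
  hence "outer_prob M {\<omega> \<in> space M. ennreal \<delta> < ennreal c * X n \<omega>}
      \<le> outer_prob M {\<omega> \<in> space M. ennreal (\<delta> / (c + 1)) < X n \<omega>}" for n
    by (intro outer_prob_mono) blast
  with N show "\<exists>N. \<forall>n\<ge>N. outer_prob M {\<omega> \<in> space M. ennreal \<delta> < ennreal c * X n \<omega>} \<le> ennreal \<eta>"
    by (meson order_trans)
qed

lemma conv_prob_enn0_approx:
  assumes M: "finite_measure M"
    and approx: "\<And>\<epsilon>. 0 < \<epsilon> \<Longrightarrow> \<exists>Y W. conv_prob_enn0 M Y
       \<and> (\<forall>n. W n \<in> borel_measurable M \<and> (\<integral>\<^sup>+ \<omega>. W n \<omega> \<partial>M) \<le> ennreal \<epsilon>)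
       \<and> (\<forall>\<^sub>F n in sequentially. AE \<omega> in M. X n \<omega> \<le> Y n \<omega> + W n \<omega> + ennreal \<epsilon>)"
  shows "conv_prob_enn0 M X"
proof (rule conv_prob_enn0I)
  fix \<delta> \<eta> :: real assume \<delta>: "0 < \<delta>" and \<eta>: "0 < \<eta>"
  define \<epsilon> where "\<epsilon> = min (\<delta> / 3) (\<delta> * \<eta> / 6)"
  have \<epsilon>: "0 < \<epsilon>" "\<epsilon> \<le> \<delta> / 3" "\<epsilon> \<le> \<delta> * \<eta> / 6" using \<delta> \<eta> by (auto simp: \<epsilon>_def)
  obtain Y W where Y: "conv_prob_enn0 M Y"
    and W: "\<And>n. W n \<in> borel_measurable M" "\<And>n. (\<integral>\<^sup>+ \<omega>. W n \<omega> \<partial>M) \<le> ennreal \<epsilon>"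
    and dom: "\<forall>\<^sub>F n in sequentially. AE \<omega> in M. X n \<omega> \<le> Y n \<omega> + W n \<omega> + ennreal \<epsilon>"
    using approx[OF \<epsilon>(1)] by blast
  obtain N1 where N1: "\<forall>n\<ge>N1. outer_prob M {\<omega> \<in> space M. ennreal (\<delta>/3) < Y n \<omega>} \<le> ennreal (\<eta>/2)"
    using conv_prob_enn0D[OF Y, of "\<delta>/3" "\<eta>/2"] \<delta> \<eta> by auto
  obtain N2 where N2: "\<forall>n\<ge>N2. AE \<omega> in M. X n \<omega> \<le> Y n \<omega> + W n \<omega> + ennreal \<epsilon>"
    using dom unfolding eventually_sequentially by auto
  have split: "ennreal (\<delta>/3) < y \<or> ennreal (\<delta>/3) < w" if "ennreal \<delta> < y + w + ennreal \<epsilon>" for y w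
  proof (rule ccontr)
    assume "\<not> ?thesis"
    hence "y + w + ennreal \<epsilon> \<le> ennreal (\<delta>/3) + ennreal (\<delta>/3) + ennreal (\<delta>/3)"
      using \<epsilon> by (intro add_mono) auto
    with that \<delta> show False by (simp flip: ennreal_plus)
  qed
  have W_small: "outer_prob M {\<omega> \<in> space M. ennreal (\<delta>/3) < W n \<omega>} \<le> ennreal (\<eta>/2)" for n
  proof -
    have "outer_prob M {\<omega> \<in> space M. ennreal (\<delta>/3) < W n \<omega>} \<le> ennreal (3 / \<delta>) * ennreal \<epsilon>"
      using outer_prob_Markov[OF W(1), of "\<delta>/3" n] mult_left_mono[OF W(2)[of n], of "ennreal (3 / \<delta>)"] \<delta>
      by simp
    also have "\<dots> \<le> ennreal (\<eta>/2)"
    proof -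
      have "3 / \<delta> * \<epsilon> \<le> \<eta> / 2" using \<epsilon> \<delta> by (simp add: field_simps)
      moreover have "ennreal (3 / \<delta>) * ennreal \<epsilon> = ennreal (3 / \<delta> * \<epsilon>)"
        using \<delta> \<epsilon> by (intro ennreal_mult[symmetric]) auto
      ultimately show ?thesis by (simp add: ennreal_leI)
    qed
    finally show ?thesis .
  qed
  show "\<exists>N. \<forall>n\<ge>N. outer_prob M {\<omega> \<in> space M. ennreal \<delta> < X n \<omega>} \<le> ennreal \<eta>"
  proof (intro exI allI impI)
    fix n assume n: "max N1 N2 \<le> n"
    have "outer_prob M {\<omega> \<in> space M. ennreal \<delta> < X n \<omega>}
        \<le> outer_prob M {\<omega> \<in> space M. ennreal \<delta> < Y n \<omega> + W n \<omega> + ennreal \<epsilon>}"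
    proof (intro outer_prob_AE_mono[OF M])
      have "AE \<omega> in M. X n \<omega> \<le> Y n \<omega> + W n \<omega> + ennreal \<epsilon>" using N2 n by simp
      thus "AE \<omega> in M. ennreal \<delta> < X n \<omega> \<longrightarrow> ennreal \<delta> < Y n \<omega> + W n \<omega> + ennreal \<epsilon>"
        by eventually_elim (auto dest: order.strict_trans2)
    qed
    also have "\<dots> \<le> outer_prob M ({\<omega> \<in> space M. ennreal (\<delta>/3) < Y n \<omega>} \<union> {\<omega> \<in> space M. ennreal (\<delta>/3) < W n \<omega>})"
      using split by (intro outer_prob_mono) blast
    also have "\<dots> \<le> ennreal (\<eta>/2) + ennreal (\<eta>/2)"
      using outer_prob_Un[OF M] N1 W_small n by (meson add_mono max.bounded_iff order_trans)
    also have "\<dots> = ennreal \<eta>" using \<eta> by (simp flip: ennreal_plus)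
    finally show "outer_prob M {\<omega> \<in> space M. ennreal \<delta> < X n \<omega>} \<le> ennreal \<eta>" .
  qed
qed

lemma ennreal_tendsto_0_cmult_le:
  fixes f :: "nat \<Rightarrow> ennreal"
  assumes "f \<longlonglongrightarrow> 0" "0 < \<epsilon>"
  obtains N where "\<And>n. N \<le> n \<Longrightarrow> ennreal c * f n \<le> ennreal \<epsilon>"
proof -
  have "(\<lambda>n. ennreal c * f n) \<longlonglongrightarrow> ennreal c * 0" by (intro ennreal_tendsto_cmult assms(1)) simp
  hence "\<forall>\<^sub>F n in sequentially. ennreal c * f n < ennreal \<epsilon>" using assms(2) by (intro order_tendstoD(2)) auto
  thus ?thesis using that unfolding eventually_sequentially by (meson less_imp_le)
qed

section \<open>Conditional expectations\<close>

lemma finite_measure_subalgebraI: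
  assumes "prob_space M" "subalgebra M F"
  shows "finite_measure_subalgebra M F"
  using assms unfolding finite_measure_subalgebra_def finite_measure_subalgebra_axioms_def
  by (auto simp: prob_space_def)

context sigma_finite_subalgebra
begin

lemma nn_cond_exp_const: "AE x in M. nn_cond_exp M F (\<lambda>x. c) x = c"
  using nn_cond_exp_F_meas[of "\<lambda>x. c"] by auto

lemma nn_cond_exp_cmult:
  assumes "f \<in> borel_measurable M"
  shows "AE x in M. nn_cond_exp M F (\<lambda>x. c * f x) x = c * nn_cond_exp M F f x"
  using nn_cond_exp_prod[of "\<lambda>_. c" f] assms by auto

lemma nn_cond_exp_finite_sum:
  assumes "finite I" "\<And>i. i \<in> I \<Longrightarrow> f i \<in> borel_measurable M"
  shows "AE x in M. nn_cond_exp M F (\<lambda>x. \<Sum>i\<in>I. f i x) x = (\<Sum>i\<in>I. nn_cond_exp M F (f i) x)"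
  using assms
proof (induction I rule: finite_induct)
  case empty
  show ?case using nn_cond_exp_const[of 0] by simp
next
  case (insert a I)
  have "AE x in M. nn_cond_exp M F (f a) x + nn_cond_exp M F (\<lambda>x. \<Sum>i\<in>I. f i x) x
      = nn_cond_exp M F (\<lambda>x. f a x + (\<Sum>i\<in>I. f i x)) x"
    using insert by (intro nn_cond_exp_sum) auto
  with insert show ?case by auto
qed

lemma nn_cond_exp_suminf:
  assumes "\<And>i. f i \<in> borel_measurable M"
  shows "AE x in M. nn_cond_exp M F (\<lambda>x. \<Sum>i. f i x) x = (\<Sum>i. nn_cond_exp M F (f i) x)"
proof -
  have "AE x in M. (\<Sum>i. nn_cond_exp M F (f i) x) = nn_cond_exp M F (\<lambda>x. \<Sum>i. f i x) x"
  proof (rule nn_cond_exp_charact)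
    fix A assume A[measurable]: "A \<in> sets F"
    then have [measurable]: "A \<in> sets M" by (meson subalg subalgebra_def subsetD)
    have "(\<integral>\<^sup>+x\<in>A. (\<Sum>i. f i x) \<partial>M) = (\<Sum>i. \<integral>\<^sup>+x. indicator A x * f i x \<partial>M)"
      using assms by (subst nn_integral_suminf[symmetric])
        (auto intro!: nn_integral_cong simp: ennreal_suminf_multc mult.commute)
    also have "\<dots> = (\<Sum>i. \<integral>\<^sup>+x. indicator A x * nn_cond_exp M F (f i) x \<partial>M)"
      using assms by (simp add: nn_cond_exp_intg)
    also have "\<dots> = (\<integral>\<^sup>+x\<in>A. (\<Sum>i. nn_cond_exp M F (f i) x) \<partial>M)"
      by (subst nn_integral_suminf[symmetric])
        (auto intro!: nn_integral_cong simp: ennreal_suminf_multc mult.commute)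
    finally show "(\<integral>\<^sup>+x\<in>A. (\<Sum>i. f i x) \<partial>M) = (\<integral>\<^sup>+x\<in>A. (\<Sum>i. nn_cond_exp M F (f i) x) \<partial>M)" .
  qed (use assms in auto)
  thus ?thesis by auto
qed

end

text \<open>The indicator of the complement of \<open>S\<close>, replaced by the measurable majorant 1 when \<open>S\<close>
  is not an event: then \<^term>\<open>real_cond_exp M F (indicator S)\<close> takes its junk value 0, so in
  both cases the conditional expectation is \<open>1 - real_cond_exp M F (indicator S)\<close>.\<close>
definition compl_indicator :: "'w measure \<Rightarrow> 'w set \<Rightarrow> 'w \<Rightarrow> real" where
  "compl_indicator M S \<omega> = (if S \<in> sets M then indicator (space M - S) \<omega> else 1)"

lemma compl_indicator_measurable[measurable]: "compl_indicator M S \<in> borel_measurable M"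
proof (cases "S \<in> sets M")
  case True
  have "(indicator (space M - S) :: _ \<Rightarrow> real) \<in> borel_measurable M"
    using True by (intro borel_measurable_indicator) auto
  thus ?thesis using True by (simp add: compl_indicator_def[abs_def])
qed (simp add: compl_indicator_def[abs_def])

lemma compl_indicator_cases:
  "\<omega> \<in> space M \<Longrightarrow> \<omega> \<notin> S \<Longrightarrow> compl_indicator M S \<omega> = 1"
  "compl_indicator M S \<omega> = 0 \<or> compl_indicator M S \<omega> = 1"
  by (auto simp: compl_indicator_def indicator_def)

lemma (in sigma_finite_subalgebra) nn_cond_exp_compl_indicator:
  assumes S: "S \<subseteq> space M"
  shows "AE \<omega> in M. nn_cond_exp M F (\<lambda>\<omega>. ennreal (compl_indicator M S \<omega>)) \<omega>
        = ennreal (1 - real_cond_exp M F (indicator S) \<omega>)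
     \<and> 0 \<le> real_cond_exp M F (indicator S) \<omega> \<and> real_cond_exp M F (indicator S) \<omega> \<le> 1"
proof (cases "S \<in> sets M")
  case True
  have neg: "AE \<omega> in M. nn_cond_exp M F (\<lambda>x. ennreal (- indicator S x)) \<omega> = 0"
    using nn_cond_exp_const[of 0] by (simp add: indicator_def ennreal_neg)
  have [measurable]: "S \<in> sets M" "space M - S \<in> sets M" using True by auto
  have "AE \<omega> in M. nn_cond_exp M F (indicator S) \<omega> + nn_cond_exp M F (indicator (space M - S)) \<omega>
       = nn_cond_exp M F (\<lambda>x. indicator S x + indicator (space M - S) x) \<omega>"
    by (rule nn_cond_exp_sum) auto
  moreover have "AE \<omega> in M. nn_cond_exp M F (\<lambda>x. indicator S x + indicator (space M - S) x) \<omega>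
       = nn_cond_exp M F (\<lambda>x. 1) \<omega>"
    using S by (intro nn_cond_exp_cong) (auto simp: indicator_def)
  ultimately have "AE \<omega> in M. nn_cond_exp M F (indicator S) \<omega> + nn_cond_exp M F (indicator (space M - S)) \<omega> = 1"
    using nn_cond_exp_const[of 1] by eventually_elim simp
  with neg show ?thesis
  proof eventually_elim
    case (elim \<omega>)
    define a where "a = nn_cond_exp M F (indicator S) \<omega>"
    define b where "b = nn_cond_exp M F (indicator (space M - S)) \<omega>"
    have ab: "a + b = 1" using elim unfolding a_def b_def by simp
    hence "a \<noteq> top" "b \<noteq> top" by auto
    then obtain ra rb where r: "a = ennreal ra" "b = ennreal rb" "0 \<le> ra" "0 \<le> rb"
      by (metis ennreal_cases)
    hence "ra + rb = 1" using ab by (metis ennreal_1 ennreal_inj ennreal_plus add_nonneg_nonneg zero_le_one)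
    moreover have "real_cond_exp M F (indicator S) \<omega> = ra"
      using elim r unfolding real_cond_exp_def a_def ennreal_indicator by simp
    moreover have "nn_cond_exp M F (\<lambda>\<omega>. ennreal (compl_indicator M S \<omega>)) \<omega> = b"
      using True unfolding b_def compl_indicator_def by (simp add: ennreal_indicator)
    ultimately show ?case using r by (simp add: eq_diff_eq)
  qed
next
  case False
  have "(\<lambda>x. ennreal (indicator S x)) \<notin> borel_measurable M"
  proof
    assume "(\<lambda>x. ennreal (indicator S x)) \<in> borel_measurable M"
    hence "{x \<in> space M. ennreal (indicator S x) = 1} \<in> sets M" by measurable
    moreover have "{x \<in> space M. ennreal (indicator S x) = 1} = S" using S by (auto simp: indicator_def)
    ultimately show False using False by simp
  qed
  hence "nn_cond_exp M F (\<lambda>x. ennreal (indicator S x)) = (\<lambda>_. 0)" unfolding nn_cond_exp_def by auto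
  moreover have "(\<lambda>x. ennreal (- indicator S x)) = (\<lambda>_. 0)" by (auto simp: indicator_def ennreal_neg)
  ultimately show ?thesis using False nn_cond_exp_const[of 0] nn_cond_exp_const[of 1]
    unfolding compl_indicator_def real_cond_exp_def by auto
qed

text \<open>The conditional expectation given \<open>F\<close> of \<open>Y\<^sub>I\<close>, for \<open>I\<close> uniform on \<open>{1..n}\<close>
  and independent of everything else.\<close>
definition avg_cond_exp :: "'w measure \<Rightarrow> 'w measure \<Rightarrow> nat \<Rightarrow> (nat \<Rightarrow> 'w \<Rightarrow> ennreal) \<Rightarrow> 'w \<Rightarrow> ennreal" where
  "avg_cond_exp M F n Y \<omega> = ennreal (1 / real n) * (\<Sum>i\<in>{1..n}. nn_cond_exp M F (Y i) \<omega>)"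

lemma avg_cond_exp_measurable[measurable]: "avg_cond_exp M F n Y \<in> borel_measurable M"
  unfolding avg_cond_exp_def[abs_def] by measurable

context sigma_finite_subalgebra
begin

lemma avg_cond_exp_add:
  assumes "\<And>i. Y i \<in> borel_measurable M" "\<And>i. Y' i \<in> borel_measurable M"
  shows "AE \<omega> in M. avg_cond_exp M F n (\<lambda>i \<omega>. Y i \<omega> + Y' i \<omega>) \<omega>
    = avg_cond_exp M F n Y \<omega> + avg_cond_exp M F n Y' \<omega>"
proof -
  have "AE \<omega> in M. \<forall>i\<in>{1..n}. nn_cond_exp M F (Y i) \<omega> + nn_cond_exp M F (Y' i) \<omega>
      = nn_cond_exp M F (\<lambda>\<omega>. Y i \<omega> + Y' i \<omega>) \<omega>"
    using assms by (subst AE_finite_all) (auto intro: nn_cond_exp_sum)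
  thus ?thesis unfolding avg_cond_exp_def
    by eventually_elim (simp add: sum.distrib[symmetric] distrib_left[symmetric])
qed

lemma avg_cond_exp_cmult:
  assumes "\<And>i. Y i \<in> borel_measurable M"
  shows "AE \<omega> in M. avg_cond_exp M F n (\<lambda>i \<omega>. c * Y i \<omega>) \<omega> = c * avg_cond_exp M F n Y \<omega>"
proof -
  have "AE \<omega> in M. \<forall>i\<in>{1..n}. nn_cond_exp M F (\<lambda>\<omega>. c * Y i \<omega>) \<omega> = c * nn_cond_exp M F (Y i) \<omega>"
    using assms by (subst AE_finite_all) (auto intro: nn_cond_exp_cmult)
  thus ?thesis unfolding avg_cond_exp_def
    by eventually_elim (simp add: sum_distrib_left mult.left_commute)
qed

lemma avg_cond_exp_lin2:
  assumes "\<And>i. Y i \<in> borel_measurable M" "\<And>i. Y' i \<in> borel_measurable M"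
  shows "AE \<omega> in M. avg_cond_exp M F n (\<lambda>i \<omega>. a * Y i \<omega> + b * Y' i \<omega>) \<omega>
    = a * avg_cond_exp M F n Y \<omega> + b * avg_cond_exp M F n Y' \<omega>"
proof -
  have "AE \<omega> in M. avg_cond_exp M F n (\<lambda>i \<omega>. a * Y i \<omega> + b * Y' i \<omega>) \<omega>
      = avg_cond_exp M F n (\<lambda>i \<omega>. a * Y i \<omega>) \<omega> + avg_cond_exp M F n (\<lambda>i \<omega>. b * Y' i \<omega>) \<omega>"
    by (rule avg_cond_exp_add) (use assms in measurable)
  with avg_cond_exp_cmult[of Y n a, OF assms(1)] avg_cond_exp_cmult[of Y' n b, OF assms(2)]
  show ?thesis by eventually_elim simp
qed

lemma avg_cond_exp_lin3:
  assumes "\<And>i. Y i \<in> borel_measurable M" "\<And>i. Y' i \<in> borel_measurable M"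
    "\<And>i. Y'' i \<in> borel_measurable M"
  shows "AE \<omega> in M. avg_cond_exp M F n (\<lambda>i \<omega>. a * Y i \<omega> + b * Y' i \<omega> + c * Y'' i \<omega>) \<omega>
    = a * avg_cond_exp M F n Y \<omega> + b * avg_cond_exp M F n Y' \<omega> + c * avg_cond_exp M F n Y'' \<omega>"
proof -
  have "AE \<omega> in M. avg_cond_exp M F n (\<lambda>i \<omega>. a * Y i \<omega> + b * Y' i \<omega> + c * Y'' i \<omega>) \<omega>
      = avg_cond_exp M F n (\<lambda>i \<omega>. a * Y i \<omega> + b * Y' i \<omega>) \<omega> + avg_cond_exp M F n (\<lambda>i \<omega>. c * Y'' i \<omega>) \<omega>"
    by (rule avg_cond_exp_add) (use assms in measurable)
  with avg_cond_exp_lin2[of Y Y' n a b, OF assms(1,2)] avg_cond_exp_cmult[of Y'' n c, OF assms(3)]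
  show ?thesis by eventually_elim simp
qed

text \<open>\<open>Y\<close> need not be measurable: \<^const>\<open>nn_cond_exp\<close> of a non-measurable function is 0.\<close>
lemma avg_cond_exp_mono:
  assumes "\<And>i \<omega>. i \<in> {1..n} \<Longrightarrow> \<omega> \<in> space M \<Longrightarrow> Y i \<omega> \<le> Y' i \<omega>"
    and "\<And>i. Y' i \<in> borel_measurable M"
  shows "AE \<omega> in M. avg_cond_exp M F n Y \<omega> \<le> avg_cond_exp M F n Y' \<omega>"
proof -
  have "AE \<omega> in M. nn_cond_exp M F (Y i) \<omega> \<le> nn_cond_exp M F (Y' i) \<omega>" if "i \<in> {1..n}" for i
  proof (cases "Y i \<in> borel_measurable M")
    case True thus ?thesis using assms that by (intro nn_cond_exp_mono) auto
  qed (simp add: nn_cond_exp_def)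
  hence "AE \<omega> in M. \<forall>i\<in>{1..n}. nn_cond_exp M F (Y i) \<omega> \<le> nn_cond_exp M F (Y' i) \<omega>"
    by (subst AE_finite_all) auto
  thus ?thesis unfolding avg_cond_exp_def by eventually_elim (auto intro!: mult_left_mono sum_mono)
qed

lemma avg_cond_exp_mono_sum:
  assumes "AE \<omega> in M. (\<Sum>i\<in>{1..n}. Y i \<omega>) \<le> (\<Sum>i\<in>{1..n}. Y' i \<omega>)"
    and "\<And>i. Y i \<in> borel_measurable M" "\<And>i. Y' i \<in> borel_measurable M"
  shows "AE \<omega> in M. avg_cond_exp M F n Y \<omega> \<le> avg_cond_exp M F n Y' \<omega>"
proof -
  have "AE \<omega> in M. nn_cond_exp M F (\<lambda>\<omega>. \<Sum>i\<in>{1..n}. Y i \<omega>) \<omega> \<le> nn_cond_exp M F (\<lambda>\<omega>. \<Sum>i\<in>{1..n}. Y' i \<omega>) \<omega>"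
    using assms by (intro nn_cond_exp_mono) auto
  moreover have "AE \<omega> in M. nn_cond_exp M F (\<lambda>\<omega>. \<Sum>i\<in>{1..n}. Y i \<omega>) \<omega> = (\<Sum>i\<in>{1..n}. nn_cond_exp M F (Y i) \<omega>)"
    using assms by (intro nn_cond_exp_finite_sum) auto
  moreover have "AE \<omega> in M. nn_cond_exp M F (\<lambda>\<omega>. \<Sum>i\<in>{1..n}. Y' i \<omega>) \<omega> = (\<Sum>i\<in>{1..n}. nn_cond_exp M F (Y' i) \<omega>)"
    using assms by (intro nn_cond_exp_finite_sum) auto
  ultimately show ?thesis unfolding avg_cond_exp_def by eventually_elim (auto intro: mult_left_mono)
qed

lemma avg_cond_exp_nn_integral:
  assumes n: "1 \<le> n" and Y: "\<And>i. Y i \<in> borel_measurable M"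
    and c: "\<And>i. i \<in> {1..n} \<Longrightarrow> (\<integral>\<^sup>+ \<omega>. Y i \<omega> \<partial>M) = c"
  shows "(\<integral>\<^sup>+ \<omega>. avg_cond_exp M F n Y \<omega> \<partial>M) = c"
proof -
  have "(\<integral>\<^sup>+ \<omega>. avg_cond_exp M F n Y \<omega> \<partial>M)
      = ennreal (1 / real n) * (\<Sum>i\<in>{1..n}. \<integral>\<^sup>+ \<omega>. nn_cond_exp M F (Y i) \<omega> \<partial>M)"
    unfolding avg_cond_exp_def by (simp add: nn_integral_cmult nn_integral_sum)
  also have "\<dots> = ennreal (1 / real n) * (\<Sum>i\<in>{1..n}. c)"
    using nn_cond_exp_intg[of "\<lambda>_. 1", OF _ Y] c by simp
  also have "\<dots> = c"
    using n by (simp add: ennreal_of_nat_eq_real_of_nat ennreal_mult[symmetric] mult.assoc[symmetric]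
        del: ennreal_mult)
  finally show ?thesis .
qed

lemma avg_cond_exp_compl_indicator:
  assumes n: "1 \<le> n" and S: "\<And>i. S i \<subseteq> space M"
  shows "AE \<omega> in M. avg_cond_exp M F n (\<lambda>i \<omega>. ennreal (compl_indicator M (S i) \<omega>)) \<omega>
     = ennreal \<bar>(1 / real n) * (\<Sum>i\<in>{1..n}. real_cond_exp M F (indicator (S i)) \<omega>) - 1\<bar>"
proof -
  have "AE \<omega> in M. \<forall>i\<in>{1..n}. nn_cond_exp M F (\<lambda>\<omega>. ennreal (compl_indicator M (S i) \<omega>)) \<omega>
        = ennreal (1 - real_cond_exp M F (indicator (S i)) \<omega>)
     \<and> 0 \<le> real_cond_exp M F (indicator (S i)) \<omega> \<and> real_cond_exp M F (indicator (S i)) \<omega> \<le> 1"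
    using S by (subst AE_finite_all, simp, intro ballI nn_cond_exp_compl_indicator)
  thus ?thesis
  proof eventually_elim
    case (elim \<omega>)
    define r where "r i = real_cond_exp M F (indicator (S i)) \<omega>" for i
    have r: "\<forall>i\<in>{1..n}. 0 \<le> r i \<and> r i \<le> 1" using elim unfolding r_def by auto
    have "(\<Sum>i\<in>{1..n}. nn_cond_exp M F (\<lambda>\<omega>. ennreal (compl_indicator M (S i) \<omega>)) \<omega>)
        = (\<Sum>i\<in>{1..n}. ennreal (1 - r i))"
      using elim unfolding r_def by (intro sum.cong) auto
    also have "\<dots> = ennreal (\<Sum>i\<in>{1..n}. 1 - r i)" using r by (intro sum_ennreal) auto
    moreover have "(\<Sum>i\<in>{1..n}. r i) \<le> real n" using sum_mono[of "{1..n}" r "\<lambda>_. 1"] r by auto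
    ultimately show ?case
      using n r unfolding avg_cond_exp_def r_def[symmetric]
      by (simp add: ennreal_mult[symmetric] sum_subtractf sum_nonneg field_simps abs_if del: ennreal_mult)
  qed
qed

end

section \<open>Truncated moments and transport costs\<close>

lemma powr_add_le_two_powr:
  fixes a b p :: real
  assumes "0 < p" "0 \<le> a" "0 \<le> b"
  shows "(a + b) powr p \<le> 2 powr p * (a powr p + b powr p)"
proof -
  have "(a + b) powr p \<le> (2 * max a b) powr p" using assms by (intro powr_mono2) auto
  also have "\<dots> = 2 powr p * max a b powr p" using assms by (simp add: powr_mult)
  also have "max a b powr p \<le> a powr p + b powr p" by (cases "a \<le> b") (auto simp: max_def)
  finally show ?thesis by (smt (verit) mult_left_mono powr_ge_zero)
qed

text \<open>A point \<open>x\<close> beyond \<open>A\<close> is either far from \<open>y\<close> or \<open>y\<close> is beyond \<open>A/2\<close>.\<close>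
lemma succ_powr_le_dist_powr_tail:
  fixes x y A p :: real
  assumes p: "0 < p" and A: "2 \<le> A" and x: "A < x"
  shows "(x + 1) powr p \<le> 2 powr p * (1 + 2 powr p) * \<bar>x - y\<bar> powr p
      + 2 powr p * ((\<bar>y\<bar> + 1) powr p * indicator {t. A/2 < \<bar>t\<bar>} y)"
proof -
  define a b c where "a = \<bar>x - y\<bar>" and "b = \<bar>y\<bar> + 1" and "c = (2::real) powr p"
  have "x + 1 \<le> a + b" unfolding a_def b_def by linarith
  hence "(x + 1) powr p \<le> (a + b) powr p" using x A p by (intro powr_mono2) auto
  also have "\<dots> \<le> c * (a powr p + b powr p)"
    unfolding c_def using p by (intro powr_add_le_two_powr) (auto simp: a_def b_def)
  finally have main: "(x + 1) powr p \<le> c * (a powr p + b powr p)" .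
  show ?thesis
  proof (cases "A/2 < \<bar>y\<bar>")
    case True
    have "c * (a powr p + b powr p) \<le> c * (1 + c) * a powr p + c * b powr p"
      by (simp add: algebra_simps c_def)
    thus ?thesis using main True unfolding a_def b_def c_def by (simp add: indicator_def)
  next
    case False
    moreover have "x - \<bar>y\<bar> \<le> a" unfolding a_def by (cases "0 \<le> y") auto
    ultimately have "b \<le> 2 * a" unfolding b_def using x A by linarith
    hence "b powr p \<le> (2 * a) powr p" using p by (intro powr_mono2) (auto simp: b_def)
    also have "\<dots> = c * a powr p" unfolding c_def a_def by (simp add: powr_mult)
    finally have "a powr p + b powr p \<le> (1 + c) * a powr p" by (simp add: algebra_simps)
    hence "c * (a powr p + b powr p) \<le> c * ((1 + c) * a powr p)"
      by (rule mult_left_mono) (simp add: c_def)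
    hence "(x + 1) powr p \<le> c * ((1 + c) * a powr p)" using main by linarith
    thus ?thesis using False unfolding a_def c_def by (simp add: indicator_def mult.assoc)
  qed
qed

text \<open>A step-function majorant of \<open>x\<^sup>p \<one>{x > A}\<close>. Being a countable combination of
  indicators of intervals, its conditional expectation is an integral against the conditional
  law, which \<^const>\<open>cond_law_mix\<close> only describes on sets.\<close>
definition tail_steps :: "real \<Rightarrow> real \<Rightarrow> real \<Rightarrow> ennreal" where
  "tail_steps p A x = (\<Sum>m. ennreal ((A + real m + 1) powr p) * indicator {A + real m <.. A + real m + 1} x)"

lemma tail_steps_measurable[measurable]: "tail_steps p A \<in> borel_measurable borel"
  unfolding tail_steps_def by measurable

lemma tail_steps_eq:
  assumes "A < x"
  defines "m \<equiv> nat \<lceil>x - A\<rceil> - 1"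
  shows "tail_steps p A x = ennreal ((A + real m + 1) powr p)" "A + real m < x" "x \<le> A + real m + 1"
proof -
  have "1 \<le> \<lceil>x - A\<rceil>" using assms by (simp add: one_le_ceiling)
  moreover from this have "1 \<le> nat \<lceil>x - A\<rceil>" by linarith
  ultimately have m: "real m + 1 = real_of_int \<lceil>x - A\<rceil>" unfolding m_def by (simp add: of_nat_diff)
  have ind: "x \<in> {A + real k <.. A + real k + 1} \<longleftrightarrow> k = m" for k
  proof -
    have "x \<in> {A + real k <.. A + real k + 1} \<longleftrightarrow> \<lceil>x - A\<rceil> = int k + 1"
      by (simp add: ceiling_eq_iff) linarith
    also have "\<dots> \<longleftrightarrow> k = m" using m by linarith
    finally show ?thesis .
  qed
  hence "(\<lambda>k. ennreal ((A + real k + 1) powr p) * indicator {A + real k <.. A + real k + 1} x)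
      = (\<lambda>k. if k = m then ennreal ((A + real m + 1) powr p) else 0)"
    by (auto simp: indicator_def fun_eq_iff)
  thus "tail_steps p A x = ennreal ((A + real m + 1) powr p)" unfolding tail_steps_def
    using sums_single[of m "\<lambda>_. ennreal ((A + real m + 1) powr p)"] by (simp add: sums_iff)
  show "A + real m < x" "x \<le> A + real m + 1" using ind[of m] by auto
qed

lemma tail_steps_eq_0: "x \<le> A \<Longrightarrow> tail_steps p A x = 0"
  unfolding tail_steps_def by (auto simp: indicator_def)

lemma powr_indicator_le_tail_steps:
  assumes "0 < p" "0 \<le> x"
  shows "ennreal (x powr p * indicator {A<..} x) \<le> tail_steps p A x"
proof (cases "A < x")
  case True
  note eq = tail_steps_eq[OF True]
  have "x powr p \<le> (A + real (nat \<lceil>x - A\<rceil> - 1) + 1) powr p"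
    using assms eq by (intro powr_mono2) auto
  thus ?thesis using True eq by (simp add: indicator_def)
qed (simp add: indicator_def)

lemma tail_steps_le_succ_powr:
  assumes "0 < p" "A < x" "0 \<le> A"
  shows "tail_steps p A x \<le> ennreal ((x + 1) powr p)"
proof -
  note eq = tail_steps_eq[OF assms(2)]
  have "(A + real (nat \<lceil>x - A\<rceil> - 1) + 1) powr p \<le> (x + 1) powr p"
    using assms eq by (intro powr_mono2) auto
  thus ?thesis using eq by simp
qed

definition transport_cost :: "real \<Rightarrow> real measure \<Rightarrow> real measure \<Rightarrow> ennreal" where
  "transport_cost p \<mu> \<nu> = (INF \<pi> \<in> couplings \<mu> \<nu>. \<integral>\<^sup>+ z. ennreal (\<bar>fst z - snd z\<bar> powr p) \<partial>\<pi>)"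

definition tail_moment :: "real \<Rightarrow> real measure \<Rightarrow> real \<Rightarrow> ennreal" where
  "tail_moment p L A = (\<integral>\<^sup>+ y. ennreal ((\<bar>y\<bar> + 1) powr p * indicator {t. A/2 < \<bar>t\<bar>} y) \<partial>L)"

lemma tail_moment_tendsto_0:
  assumes sL: "sets L = sets borel" and fin: "(\<integral>\<^sup>+ y. ennreal ((\<bar>y\<bar> + 1) powr p) \<partial>L) < \<infinity>"
  shows "(\<lambda>a::nat. tail_moment p L (real a)) \<longlonglongrightarrow> 0"
proof -
  define f where "f a y = ennreal ((\<bar>y\<bar> + 1) powr p * indicator {t. real a/2 < \<bar>t\<bar>} y)" for a :: nat and y
  have dec: "decseq f"
    by (intro decseq_SucI le_funI) (auto simp: f_def indicator_def intro!: ennreal_leI)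
  have [measurable]: "f a \<in> borel_measurable L" for a
    unfolding f_def measurable_cong_sets[OF sL refl] by measurable
  have "(\<integral>\<^sup>+ y. f 0 y \<partial>L) < \<infinity>"
    using fin by (rule le_less_trans[rotated]) (auto simp: f_def indicator_def intro!: nn_integral_mono)
  hence "(INF a. integral\<^sup>N L (f a)) = (\<integral>\<^sup>+ y. (INF a. f a y) \<partial>L)"
    by (intro nn_integral_monotone_convergence_INF_decseq[symmetric] dec) auto
  moreover have "(INF a. f a y) = 0" for y
  proof -
    obtain a :: nat where "2 * \<bar>y\<bar> < real a" using reals_Archimedean2 by auto
    hence "f a y = 0" unfolding f_def by (simp add: indicator_def)
    thus ?thesis by (metis INF_lower UNIV_I le_zero_eq)
  qed
  ultimately have "(INF a. integral\<^sup>N L (f a)) = 0" by simp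
  moreover have "(\<lambda>a. integral\<^sup>N L (f a)) \<longlonglongrightarrow> (INF a. integral\<^sup>N L (f a))"
    by (rule LIMSEQ_INF) (auto simp: decseq_def intro!: nn_integral_mono dest: decseqD[OF dec] le_funD)
  ultimately show ?thesis unfolding f_def tail_moment_def by simp
qed

lemma ennreal_le_mult_INF_add:
  fixes X b :: ennreal and a :: real
  assumes H: "\<And>\<pi>. \<pi> \<in> C \<Longrightarrow> X \<le> ennreal a * I \<pi> + b" and a: "0 < a"
  shows "X \<le> ennreal a * (INF \<pi>\<in>C. I \<pi>) + b"
proof (rule ennreal_le_epsilon)
  fix e :: real assume fin: "ennreal a * (INF \<pi>\<in>C. I \<pi>) + b < top" and e: "0 < e"
  hence "(INF \<pi>\<in>C. I \<pi>) < top" using a by (auto simp: ennreal_mult_less_top)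
  hence "(INF \<pi>\<in>C. I \<pi>) < (INF \<pi>\<in>C. I \<pi>) + ennreal (e / a)"
    using e a by (simp add: ennreal_add_left_cancel_less less_top[symmetric])
  then obtain \<pi> where \<pi>: "\<pi> \<in> C" "I \<pi> < (INF \<pi>\<in>C. I \<pi>) + ennreal (e / a)"
    unfolding INF_less_iff by auto
  have "X \<le> ennreal a * I \<pi> + b" using H \<pi> by auto
  also have "\<dots> \<le> ennreal a * ((INF \<pi>\<in>C. I \<pi>) + ennreal (e / a)) + b"
    using \<pi> by (intro add_mono mult_left_mono) auto
  also have "\<dots> = ennreal a * (INF \<pi>\<in>C. I \<pi>) + b + ennreal e"
    using a e by (simp add: distrib_left ennreal_mult[symmetric] algebra_simps del: ennreal_mult)
  finally show "X \<le> ennreal a * (INF \<pi>\<in>C. I \<pi>) + b + ennreal e" .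
qed

lemma nn_integral_tail_steps_le_transport_cost:
  assumes p: "0 < p" and A: "2 \<le> A"
  shows "(\<integral>\<^sup>+ x. tail_steps p A x \<partial>\<kappa>)
    \<le> ennreal (2 powr p * (1 + 2 powr p)) * transport_cost p \<kappa> L + ennreal (2 powr p) * tail_moment p L A"
  unfolding transport_cost_def
proof (rule ennreal_le_mult_INF_add)
  fix \<pi> assume \<pi>: "\<pi> \<in> couplings \<kappa> L"
  have "sets \<pi> = sets (borel \<Otimes>\<^sub>M borel :: (real \<times> real) measure)" using \<pi> unfolding couplings_def by auto
  hence sp: "sets \<pi> = sets (borel :: (real \<times> real) measure)" by (simp only: borel_prod)
  have [measurable]: "fst \<in> measurable \<pi> borel" "snd \<in> measurable \<pi> borel"
    by (simp_all add: measurable_cong_sets[OF sp refl])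
      (intro borel_measurable_continuous_onI continuous_intros)+
  have k: "\<kappa> = distr \<pi> borel fst" and l: "L = distr \<pi> borel snd" using \<pi> unfolding couplings_def by auto
  have "(\<integral>\<^sup>+ x. tail_steps p A x \<partial>\<kappa>) = (\<integral>\<^sup>+ z. tail_steps p A (fst z) \<partial>\<pi>)"
    unfolding k by (rule nn_integral_distr) auto
  also have "\<dots> \<le> (\<integral>\<^sup>+ z. ennreal (2 powr p * (1 + 2 powr p)) * ennreal (\<bar>fst z - snd z\<bar> powr p)
      + ennreal (2 powr p) * ennreal ((\<bar>snd z\<bar> + 1) powr p * indicator {t. A/2 < \<bar>t\<bar>} (snd z)) \<partial>\<pi>)"
  proof (rule nn_integral_mono)
    fix z :: "real \<times> real"
    show "tail_steps p A (fst z) \<le> ennreal (2 powr p * (1 + 2 powr p)) * ennreal (\<bar>fst z - snd z\<bar> powr p)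
      + ennreal (2 powr p) * ennreal ((\<bar>snd z\<bar> + 1) powr p * indicator {t. A/2 < \<bar>t\<bar>} (snd z))"
    proof (cases "A < fst z")
      case True
      have "tail_steps p A (fst z) \<le> ennreal ((fst z + 1) powr p)"
        using True p A by (intro tail_steps_le_succ_powr) auto
      also have "\<dots> \<le> ennreal (2 powr p * (1 + 2 powr p) * \<bar>fst z - snd z\<bar> powr p
          + 2 powr p * ((\<bar>snd z\<bar> + 1) powr p * indicator {t. A/2 < \<bar>t\<bar>} (snd z)))"
        using succ_powr_le_dist_powr_tail[OF p A True] by (intro ennreal_leI) auto
      finally show ?thesis
        by (simp add: ennreal_mult[symmetric] ennreal_plus[symmetric] del: ennreal_mult ennreal_plus)
    qed (simp add: tail_steps_eq_0)
  qed
  also have "\<dots> = ennreal (2 powr p * (1 + 2 powr p)) * (\<integral>\<^sup>+ z. ennreal (\<bar>fst z - snd z\<bar> powr p) \<partial>\<pi>)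
     + ennreal (2 powr p) * (\<integral>\<^sup>+ z. ennreal ((\<bar>snd z\<bar> + 1) powr p * indicator {t. A/2 < \<bar>t\<bar>} (snd z)) \<partial>\<pi>)"
    by (subst nn_integral_add) (auto simp: nn_integral_cmult)
  also have "(\<integral>\<^sup>+ z. ennreal ((\<bar>snd z\<bar> + 1) powr p * indicator {t. A/2 < \<bar>t\<bar>} (snd z)) \<partial>\<pi>) = tail_moment p L A"
    unfolding tail_moment_def l by (rule nn_integral_distr[symmetric]) auto
  finally show "(\<integral>\<^sup>+ x. tail_steps p A x \<partial>\<kappa>) \<le> ennreal (2 powr p * (1 + 2 powr p))
      * (\<integral>\<^sup>+ z. ennreal (\<bar>fst z - snd z\<bar> powr p) \<partial>\<pi>) + ennreal (2 powr p) * tail_moment p L A" .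
qed (simp add: add_pos_pos)

lemma dp_conv_transport_cost:
  assumes "dp_conv M F p Y L" "0 < p"
  obtains \<kappa> where "\<And>n. 1 \<le> n \<Longrightarrow> cond_law_mix M (F n) n (Y n) (\<kappa> n)"
    and "conv_prob_enn0 M (\<lambda>n \<omega>. transport_cost p (\<kappa> n \<omega>) L)"
  using assms conv_prob_enn0_enn_root_iff[OF assms(2)]
  unfolding dp_conv_def wasserstein_def transport_cost_def[symmetric] by blast

lemma nn_integral_succ_powr_distr_finite:
  assumes \<mu>: "prob_space \<mu>" and h: "h \<in> borel_measurable \<mu>" "\<And>x. 0 \<le> h x"
    and fin: "(\<integral>\<^sup>+ x. ennreal (h x powr p) \<partial>\<mu>) < \<infinity>" and p: "0 < p"
  shows "(\<integral>\<^sup>+ y. ennreal ((\<bar>y\<bar> + 1) powr p) \<partial>distr \<mu> borel h) < \<infinity>"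
proof -
  have "(\<integral>\<^sup>+ y. ennreal ((\<bar>y\<bar> + 1) powr p) \<partial>distr \<mu> borel h) = (\<integral>\<^sup>+ x. ennreal ((h x + 1) powr p) \<partial>\<mu>)"
    using h by (subst nn_integral_distr) auto
  also have "\<dots> \<le> (\<integral>\<^sup>+ x. ennreal (2 powr p) * (ennreal (h x powr p) + 1) \<partial>\<mu>)"
  proof (rule nn_integral_mono)
    fix x
    have "(h x + 1) powr p \<le> 2 powr p * (h x powr p + 1)"
      using powr_add_le_two_powr[OF p h(2)[of x], of 1] by simp
    hence "ennreal ((h x + 1) powr p) \<le> ennreal (2 powr p * (h x powr p + 1))" by (rule ennreal_leI)
    also have "\<dots> = ennreal (2 powr p) * (ennreal (h x powr p) + 1)"
      by (simp add: ennreal_mult' ennreal_plus)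
    finally show "ennreal ((h x + 1) powr p) \<le> ennreal (2 powr p) * (ennreal (h x powr p) + 1)" .
  qed
  also have "\<dots> = ennreal (2 powr p) * ((\<integral>\<^sup>+ x. ennreal (h x powr p) \<partial>\<mu>) + emeasure \<mu> (space \<mu>))"
    using h by (simp add: nn_integral_cmult nn_integral_add)
  also have "\<dots> < \<infinity>" using fin prob_space.emeasure_space_1[OF \<mu>] by (simp add: ennreal_mult_less_top)
  finally show ?thesis .
qed

context sigma_finite_subalgebra
begin

lemma avg_cond_exp_tail_steps:
  assumes cl: "cond_law_mix M F n Y \<kappa>" and [measurable]: "\<And>i. Y i \<in> borel_measurable M"
  shows "AE \<omega> in M. avg_cond_exp M F n (\<lambda>i \<omega>. tail_steps p A (Y i \<omega>)) \<omega> = (\<integral>\<^sup>+ x. tail_steps p A x \<partial>\<kappa> \<omega>)"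
proof -
  define c where "c m = ennreal ((A + real m + 1) powr p)" for m :: nat
  define B where "B m = {A + real m <.. A + real m + 1}" for m :: nat
  define ind where "ind i m = (indicator {\<omega> \<in> space M. Y i \<omega> \<in> B m} :: 'a \<Rightarrow> ennreal)" for i m
  have [measurable]: "B m \<in> sets borel" "ind i m \<in> borel_measurable M" for i m
    unfolding ind_def B_def by measurable
  have law: "AE \<omega> in M. \<forall>m. emeasure (\<kappa> \<omega>) (B m) = avg_cond_exp M F n (\<lambda>i. ind i m) \<omega>"
    unfolding AE_all_countable ind_def avg_cond_exp_def using cl unfolding cond_law_mix_def by auto
  have "AE \<omega> in M. nn_cond_exp M F (\<lambda>\<omega>. tail_steps p A (Y i \<omega>)) \<omega> = (\<Sum>m. c m * nn_cond_exp M F (ind i m) \<omega>)" for i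
  proof -
    have "AE \<omega> in M. nn_cond_exp M F (\<lambda>\<omega>. tail_steps p A (Y i \<omega>)) \<omega> = nn_cond_exp M F (\<lambda>\<omega>. \<Sum>m. c m * ind i m \<omega>) \<omega>"
      by (rule nn_cond_exp_cong) (auto simp: tail_steps_def c_def ind_def B_def indicator_def)
    moreover have "AE \<omega> in M. nn_cond_exp M F (\<lambda>\<omega>. \<Sum>m. c m * ind i m \<omega>) \<omega> = (\<Sum>m. nn_cond_exp M F (\<lambda>\<omega>. c m * ind i m \<omega>) \<omega>)"
      by (rule nn_cond_exp_suminf) auto
    moreover have "AE \<omega> in M. \<forall>m. nn_cond_exp M F (\<lambda>\<omega>. c m * ind i m \<omega>) \<omega> = c m * nn_cond_exp M F (ind i m) \<omega>"
      unfolding AE_all_countable by (auto intro: nn_cond_exp_cmult)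
    ultimately show ?thesis by eventually_elim auto
  qed
  hence "AE \<omega> in M. \<forall>i\<in>{1..n}. nn_cond_exp M F (\<lambda>\<omega>. tail_steps p A (Y i \<omega>)) \<omega> = (\<Sum>m. c m * nn_cond_exp M F (ind i m) \<omega>)"
    by (subst AE_finite_all) auto
  with law AE_space show ?thesis
  proof eventually_elim
    case (elim \<omega>)
    have sk: "sets (\<kappa> \<omega>) = sets borel" using cl elim unfolding cond_law_mix_def by auto
    have "(\<integral>\<^sup>+ x. tail_steps p A x \<partial>\<kappa> \<omega>) = (\<Sum>m. \<integral>\<^sup>+ x. c m * indicator (B m) x \<partial>\<kappa> \<omega>)"
      unfolding tail_steps_def c_def B_def
      by (rule nn_integral_suminf) (auto simp: measurable_cong_sets[OF sk refl])
    also have "\<dots> = (\<Sum>m. c m * avg_cond_exp M F n (\<lambda>i. ind i m) \<omega>)"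
      using elim by (subst nn_integral_cmult_indicator) (auto simp: sk)
    also have "\<dots> = ennreal (1 / real n) * (\<Sum>i\<in>{1..n}. \<Sum>m. c m * nn_cond_exp M F (ind i m) \<omega>)"
      unfolding avg_cond_exp_def
      by (simp add: sum_distrib_left ennreal_suminf_cmult[symmetric] suminf_sum mult.left_commute)
    also have "\<dots> = avg_cond_exp M F n (\<lambda>i \<omega>. tail_steps p A (Y i \<omega>)) \<omega>"
      using elim unfolding avg_cond_exp_def by simp
    finally show ?case by simp
  qed
qed

lemma avg_cond_exp_tail_steps_le:
  assumes "cond_law_mix M F n Y \<kappa>" "\<And>i. Y i \<in> borel_measurable M" "0 < p" "2 \<le> A"
  shows "AE \<omega> in M. avg_cond_exp M F n (\<lambda>i \<omega>. tail_steps p A (Y i \<omega>)) \<omega>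
    \<le> ennreal (2 powr p * (1 + 2 powr p)) * transport_cost p (\<kappa> \<omega>) L + ennreal (2 powr p) * tail_moment p L A"
  using avg_cond_exp_tail_steps[OF assms(1,2), of p A]
  by eventually_elim (simp add: nn_integral_tail_steps_le_transport_cost assms)

end

section \<open>Marks\<close>

lemma measurable_real_fst[measurable]: "(\<lambda>x::'a::topological_space mark. real (fst x)) \<in> borel_measurable borel"
  by (intro borel_measurable_continuous_onI continuous_intros)

lemma rho_eq: "rho x y = \<bar>real (fst x) - real (fst y)\<bar> + \<bar>real (fst (snd x)) - real (fst (snd y))\<bar>
   + dist (snd (snd x)) (snd (snd y))"
  by (cases x; cases y) (auto simp: rho_def)

lemma rho_nonneg: "0 \<le> rho x y"
  unfolding rho_eq by simp

lemma continuous_on_rho: "continuous_on UNIV (\<lambda>z::'a::metric_space mark \<times> 'a mark. rho (fst z) (snd z))"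
  unfolding rho_eq by (intro continuous_intros)

lemma rho_measurable[measurable]:
  fixes U V :: "'w \<Rightarrow> 'a::{metric_space, second_countable_topology} mark"
  assumes "U \<in> borel_measurable M" "V \<in> borel_measurable M"
  shows "(\<lambda>\<omega>. rho (U \<omega>) (V \<omega>)) \<in> borel_measurable M"
  using measurable_compose[OF borel_measurable_Pair[OF assms]
      borel_measurable_continuous_onI[OF continuous_on_rho]] by simp

lemma rho_less_1D:
  assumes "rho x y < 1"
  shows "fst x = fst y" "fst (snd x) = fst (snd y)" "dist (snd (snd x)) (snd (snd y)) \<le> rho x y"
proof -
  have "\<bar>real (fst x) - real (fst y)\<bar> < 1" "\<bar>real (fst (snd x)) - real (fst (snd y))\<bar> < 1"
    using assms zero_le_dist[of "snd (snd x)" "snd (snd y)"] unfolding rho_eq by linarith+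
  thus "fst x = fst y" "fst (snd x) = fst (snd y)" by linarith+
  show "dist (snd (snd x)) (snd (snd y)) \<le> rho x y" unfolding rho_eq by simp
qed

definition rho_locally_bounded :: "('a::metric_space mark \<Rightarrow> real) \<Rightarrow> bool" where
  "rho_locally_bounded \<phi> \<longleftrightarrow> (\<forall>y. \<exists>r>0. \<exists>B. \<forall>x. rho x y < r \<longrightarrow> \<phi> x \<le> B)"

lemma rho_locally_bounded_continuous:
  fixes \<phi> :: "'a::metric_space mark \<Rightarrow> real"
  assumes "continuous_on UNIV \<phi>"
  shows "rho_locally_bounded \<phi>"
  unfolding rho_locally_bounded_def
proof
  fix y :: "'a mark"
  let ?U = "\<phi> -` {..<\<phi> y + 1}"
  have "open ?U" "y \<in> ?U" using assms by (auto intro: open_vimage)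
  then obtain A1 B1 where AB1: "open A1" "open B1" "y \<in> A1 \<times> B1" "A1 \<times> B1 \<subseteq> ?U"
    by (rule open_prod_elim)
  then obtain A2 B2 where AB2: "open A2" "open B2" "snd y \<in> A2 \<times> B2" "A2 \<times> B2 \<subseteq> B1"
    by (metis mem_Times_iff open_prod_elim)
  then obtain r where r: "r > 0" "\<And>b. dist b (snd (snd y)) < r \<Longrightarrow> b \<in> B2"
    unfolding open_dist by (metis mem_Times_iff)
  have "\<phi> x \<le> \<phi> y + 1" if x: "rho x y < min 1 r" for x
  proof -
    have eq: "fst x = fst y" "fst (snd x) = fst (snd y)" and "dist (snd (snd x)) (snd (snd y)) < r"
      using rho_less_1D[of x y] x by auto
    hence "snd x \<in> A2 \<times> B2" using AB2(3) r(2) by (cases "snd x") auto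
    hence "x \<in> A1 \<times> B1" using AB1(3) AB2(4) eq by (cases x) auto
    thus ?thesis using AB1(4) by auto
  qed
  with r(1) show "\<exists>r>0. \<exists>B. \<forall>x. rho x y < r \<longrightarrow> \<phi> x \<le> B"
    by (intro exI[of _ "min 1 r"] conjI exI[of _ "\<phi> y + 1"]) auto
qed

lemma rho_locally_bounded_Hoelder:
  assumes H: "\<And>x y. rho x y < r \<Longrightarrow> \<bar>\<phi> x - \<phi> y\<bar> \<le> Q * rho x y powr \<gamma>"
    and r: "0 < r" "r \<le> 1" and Q: "0 \<le> Q" and \<gamma>: "0 \<le> \<gamma>"
  shows "rho_locally_bounded (\<lambda>x. \<bar>\<phi> x\<bar>)"
  unfolding rho_locally_bounded_def
proof
  fix y
  have "\<bar>\<phi> x\<bar> \<le> \<bar>\<phi> y\<bar> + Q" if x: "rho x y < r" for x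
  proof -
    have "Q * rho x y powr \<gamma> \<le> Q * 1"
      using x r Q \<gamma> rho_nonneg[of x y] by (intro mult_left_mono powr_le1) auto
    with H[OF x] show ?thesis by linarith
  qed
  with r(1) show "\<exists>r>0. \<exists>B. \<forall>x. rho x y < r \<longrightarrow> \<bar>\<phi> x\<bar> \<le> B" by blast
qed

definition tail_nbhd :: "('a::metric_space mark \<Rightarrow> real) \<Rightarrow> nat \<Rightarrow> 'a mark set" where
  "tail_nbhd \<phi> m = {y. \<exists>x. rho x y < 1 / (real m + 1) \<and> real m < \<phi> x}"

lemma open_tail_nbhd: "open (tail_nbhd \<phi> m)"
proof -
  have "tail_nbhd \<phi> m = (\<Union>x\<in>{x. real m < \<phi> x}. {y. rho x y < 1 / (real m + 1)})"
    unfolding tail_nbhd_def by auto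
  moreover have "continuous_on UNIV (\<lambda>y. rho x y)" for x :: "'a mark"
    unfolding rho_eq by (intro continuous_intros)
  ultimately show ?thesis by (auto intro!: open_Collect_less continuous_on_const)
qed

lemma tail_nbhd_borel[measurable]: "tail_nbhd \<phi> m \<in> sets borel"
  using open_tail_nbhd by (rule borel_open)

lemma decseq_tail_nbhd: "decseq (tail_nbhd \<phi>)"
proof (rule decseq_SucI, rule subsetI)
  fix m y assume "y \<in> tail_nbhd \<phi> (Suc m)"
  then obtain x where "rho x y < 1 / (real (Suc m) + 1)" "real (Suc m) < \<phi> x"
    unfolding tail_nbhd_def by auto
  moreover have "1 / (real (Suc m) + 1) \<le> 1 / (real m + 1)" by (intro divide_left_mono) auto
  ultimately have "rho x y < 1 / (real m + 1)" "real m < \<phi> x" by linarith+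
  thus "y \<in> tail_nbhd \<phi> m" unfolding tail_nbhd_def by blast
qed

lemma INT_tail_nbhd_empty:
  assumes "rho_locally_bounded \<phi>"
  shows "(\<Inter>m. tail_nbhd \<phi> m) = {}"
proof (rule ccontr)
  assume "(\<Inter>m. tail_nbhd \<phi> m) \<noteq> {}"
  then obtain y where y: "\<And>m. y \<in> tail_nbhd \<phi> m" by blast
  obtain r B where rB: "r > 0" "\<And>x. rho x y < r \<Longrightarrow> \<phi> x \<le> B"
    using assms unfolding rho_locally_bounded_def by blast
  obtain m :: nat where m: "1 / r < real m" "B < real m"
    using reals_Archimedean2[of "max (1 / r) B"] by auto
  from y[of m] obtain x where x: "rho x y < 1 / (real m + 1)" "real m < \<phi> x"
    unfolding tail_nbhd_def by auto
  have "1 / (real m + 1) < r" using m(1) rB(1) by (simp add: field_simps)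
  with x(1) have "\<phi> x \<le> B" by (intro rB(2)) linarith
  with x(2) m(2) show False by linarith
qed

lemma emeasure_tail_nbhd_tendsto_0:
  assumes "finite_measure N" "sets N = sets borel" "rho_locally_bounded \<phi>"
  shows "(\<lambda>m. emeasure N (tail_nbhd \<phi> m)) \<longlonglongrightarrow> 0"
proof -
  have "(\<lambda>m. emeasure N (tail_nbhd \<phi> m)) \<longlonglongrightarrow> emeasure N (\<Inter>m. tail_nbhd \<phi> m)"
    using assms decseq_tail_nbhd
    by (intro Lim_emeasure_decseq) (auto simp: finite_measure.emeasure_finite)
  thus ?thesis using INT_tail_nbhd_empty[OF assms(3)] by simp
qed

lemma indicator_le_rho_tail_nbhd:
  "indicator {x. real m < \<phi> x} x \<le> (real m + 1) * rho x y + indicator (tail_nbhd \<phi> m) y"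
proof (cases "real m < \<phi> x \<and> rho x y < 1 / (real m + 1)")
  case True
  hence "y \<in> tail_nbhd \<phi> m" unfolding tail_nbhd_def by blast
  thus ?thesis using rho_nonneg[of x y] by (simp add: indicator_def)
next
  case False
  hence "real m < \<phi> x \<Longrightarrow> 1 \<le> (real m + 1) * rho x y" by (simp add: field_simps)
  thus ?thesis using rho_nonneg[of x y] by (auto simp: indicator_def)
qed

section \<open>The graph\<close>

lemma gmark_measurable[measurable]:
  fixes attr :: "nat \<Rightarrow> nat \<Rightarrow> 'w \<Rightarrow> 'a::{metric_space, second_countable_topology}"
  assumes "\<And>i. attr n i \<in> borel_measurable M"
    and "\<And>j i. E n j i \<in> measurable M (count_space UNIV)"
  shows "gmark E attr n i \<in> borel_measurable M"
proof -
  have "measurable M (count_space UNIV) = (borel_measurable M :: ('w \<Rightarrow> nat) set)"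
    by (rule measurable_cong_sets) (auto simp: sets_borel_eq_count_space)
  hence [measurable]: "E n j i \<in> borel_measurable M" for j i using assms(2) by auto
  show ?thesis using assms(1) unfolding gmark_def[abs_def] indeg_def outdeg_def by measurable
qed

lemma subalgebra_Fn:
  assumes "\<And>i. attr n i \<in> borel_measurable M"
  shows "subalgebra M (Fn M attr n)"
proof -
  let ?G = "{attr n i -` B \<inter> space M | i B. i \<in> {1..n} \<and> B \<in> sets borel}"
  have G: "?G \<subseteq> sets M" using assms by (auto intro: measurable_sets)
  hence "?G \<subseteq> Pow (space M)" using sets.sets_into_space by auto
  thus ?thesis unfolding subalgebra_def Fn_def
    using G sets.sigma_sets_subset[OF G] by (auto simp: sets_measure_of)
qed

lemma opnorm_p_sum_powr_le:
  assumes p: "0 < p" and op: "opnorm_p p n C \<le> ennreal K" and K: "0 \<le> K"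
    and T: "T \<subseteq> {1..n}" and C: "\<And>i j. 0 \<le> C i j"
  shows "(\<Sum>i\<in>{1..n}. (\<Sum>j\<in>T. C i j) powr p) \<le> K powr p * real (card T)"
proof (cases "T = {}")
  case False
  define t where "t = real (card T)"
  have t: "0 < t" unfolding t_def using T False finite_subset by (auto simp: card_gt_0_iff)
  define s where "s = t powr (1/p)"
  have s: "0 < s" "s powr p = t" unfolding s_def using t p by (auto simp: powr_powr)
  \<comment> \<open>Test the operator norm on the normalised indicator vector of \<open>T\<close>.\<close>
  define x where "x j = indicator T j / s" for j
  have "(\<Sum>j\<in>{1..n}. \<bar>x j\<bar> powr p) = (\<Sum>j\<in>T. (1 / s) powr p)"
    unfolding x_def using T s by (intro sum.mono_neutral_cong_right) (auto simp: indicator_def)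
  also have "\<dots> = 1" using s t by (simp add: t_def powr_divide)
  finally have x: "(\<Sum>j\<in>{1..n}. \<bar>x j\<bar> powr p) \<le> 1" by simp
  define S where "S i = (\<Sum>j\<in>T. C i j)" for i
  have S: "0 \<le> S i" for i unfolding S_def using C by (simp add: sum_nonneg)
  have Cx: "(\<Sum>j\<in>{1..n}. C i j * x j) = S i / s" for i
  proof -
    have "(\<Sum>j\<in>{1..n}. C i j * x j) = (\<Sum>j\<in>T. C i j / s)"
      unfolding x_def using T by (intro sum.mono_neutral_cong_right) (auto simp: indicator_def)
    thus ?thesis unfolding S_def by (simp add: sum_divide_distrib)
  qed
  define Q where "Q = (\<Sum>i\<in>{1..n}. \<bar>S i / s\<bar> powr p)"
  have "ennreal (Q powr (1/p)) \<le> opnorm_p p n C"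
    unfolding opnorm_p_def Q_def using x
    by (intro SUP_upper2[of x]) (auto simp only: Cx mem_Collect_eq order_refl)
  with op have "ennreal (Q powr (1/p)) \<le> ennreal K" by simp
  hence "Q powr (1/p) \<le> K" using K by (simp add: ennreal_le_iff)
  hence "(Q powr (1/p)) powr p \<le> K powr p" using p by (intro powr_mono2) auto
  hence "Q \<le> K powr p" using p by (simp add: powr_powr Q_def sum_nonneg)
  moreover have "Q = (\<Sum>i\<in>{1..n}. S i powr p) / t"
    unfolding Q_def using S s by (simp add: powr_divide sum_divide_distrib)
  ultimately show ?thesis using t unfolding S_def t_def by (simp add: divide_le_eq)
qed (use p K in simp)

lemma sum_mult_le_split:
  fixes e w :: "nat \<Rightarrow> real"
  assumes "finite J" "T \<subseteq> J" "0 \<le> m" "\<And>j. j \<in> J \<Longrightarrow> 0 \<le> e j" "\<And>j. j \<in> J - T \<Longrightarrow> w j \<le> m"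
  shows "(\<Sum>j\<in>J. e j * w j) \<le> m * (\<Sum>j\<in>J. e j) + (\<Sum>j\<in>T. e j * w j)"
proof -
  have "(\<Sum>j\<in>J - T. e j * w j) \<le> (\<Sum>j\<in>J - T. m * e j)"
  proof (rule sum_mono)
    fix j assume "j \<in> J - T"
    thus "e j * w j \<le> m * e j" using assms(4,5) mult_left_mono[of "w j" m "e j"] by (simp add: mult.commute)
  qed
  also have "\<dots> = m * (\<Sum>j\<in>J - T. e j)" by (simp add: sum_distrib_left)
  also have "\<dots> \<le> m * (\<Sum>j\<in>J. e j)" using assms by (intro mult_left_mono sum_mono2) auto
  finally show ?thesis using assms by (simp add: sum.subset_diff[of T J])
qed

lemma powr_truncation_bound:
  fixes J J' Y m f c A p :: real
  assumes p: "0 < p" and J: "0 \<le> J" "J \<le> J'" "J' = 0 \<or> J' = 1"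
    and Y: "0 \<le> Y" "Y \<le> m * f + c" and nonneg: "0 \<le> m" "0 \<le> f" "0 \<le> c" "0 \<le> A"
  shows "(J * Y) powr p \<le> 2 powr p * m powr p * A powr p * J'
    + 2 powr p * m powr p * (f powr p * indicator {A<..} f) + 2 powr p * c powr p"
proof -
  have "J * Y \<le> J' * (m * f) + c"
    using J Y nonneg by (cases "J' = 0") (auto intro: order_trans[OF mult_left_le_one_le])
  hence "(J * Y) powr p \<le> (J' * (m * f) + c) powr p" using J Y p by (intro powr_mono2) auto
  also have "\<dots> \<le> 2 powr p * ((J' * (m * f)) powr p + c powr p)"
    using J nonneg p by (intro powr_add_le_two_powr) auto
  also have "(J' * (m * f)) powr p \<le> m powr p * (A powr p * J' + f powr p * indicator {A<..} f)"
    using J nonneg p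
    by (cases "A < f") (auto simp: indicator_def powr_mult powr_mono2 mult_left_mono)
  finally show ?thesis
    by (smt (verit) distrib_left mult.assoc mult_left_mono powr_ge_zero)
qed

definition in_weight :: "(nat \<Rightarrow> nat \<Rightarrow> nat \<Rightarrow> 'w \<Rightarrow> nat) \<Rightarrow> (nat \<Rightarrow> nat \<Rightarrow> 'w \<Rightarrow> 'a)
    \<Rightarrow> ('a mark \<Rightarrow> real) \<Rightarrow> nat \<Rightarrow> nat \<Rightarrow> 'w \<Rightarrow> real" where
  "in_weight E attr \<phi> n i \<omega> = (\<Sum>j\<in>{1..n}. real (E n j i \<omega>) * \<phi> (gmark E attr n j \<omega>))"

definition heavy_in_weight :: "(nat \<Rightarrow> nat \<Rightarrow> nat \<Rightarrow> 'w \<Rightarrow> nat) \<Rightarrow> (nat \<Rightarrow> nat \<Rightarrow> 'w \<Rightarrow> 'a)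
    \<Rightarrow> ('a mark \<Rightarrow> real) \<Rightarrow> nat \<Rightarrow> nat \<Rightarrow> nat \<Rightarrow> 'w \<Rightarrow> real" where
  "heavy_in_weight E attr \<phi> m n i \<omega> = (\<Sum>j\<in>{1..n}.
      if real m < \<phi> (gmark E attr n j \<omega>) then real (E n j i \<omega>) * \<phi> (gmark E attr n j \<omega>) else 0)"

lemma in_weight_le:
  assumes "\<And>x. 0 \<le> \<phi> x"
  shows "in_weight E attr \<phi> n i \<omega>
    \<le> real m * real (fst (gmark E attr n i \<omega>)) + heavy_in_weight E attr \<phi> m n i \<omega>"
proof -
  have "in_weight E attr \<phi> n i \<omega> \<le> real m * (\<Sum>j\<in>{1..n}. real (E n j i \<omega>)) + heavy_in_weight E attr \<phi> m n i \<omega>"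
    unfolding in_weight_def heavy_in_weight_def sum.inter_filter[OF finite_atLeastAtMost, symmetric]
    by (rule sum_mult_le_split) auto
  thus ?thesis by (simp add: gmark_def indeg_def)
qed

lemma sum_heavy_in_weight_le:
  fixes Y :: "nat \<Rightarrow> 'a::metric_space mark"
  assumes p: "0 < p" and K: "0 \<le> K" and \<sigma>m: "\<And>x. 0 \<le> \<sigma>m x" and \<phi>: "\<And>x. 0 \<le> \<phi> x"
    and op: "opnorm_p p n (\<lambda>i j. \<sigma>m (gmark E attr n i \<omega>) * \<phi> (gmark E attr n j \<omega>) * real (E n j i \<omega>))
      \<le> ennreal K"
  shows "(\<Sum>i\<in>{1..n}. ennreal ((\<sigma>m (gmark E attr n i \<omega>) * heavy_in_weight E attr \<phi> m n i \<omega>) powr p))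
    \<le> (\<Sum>j\<in>{1..n}. ennreal (K powr p * (real m + 1)) * ennreal (rho (gmark E attr n j \<omega>) (Y j))
        + ennreal (K powr p) * indicator (tail_nbhd \<phi> m) (Y j))"
proof -
  define X where "X j = gmark E attr n j \<omega>" for j
  define T where "T = {j\<in>{1..n}. real m < \<phi> (X j)}"
  have "(\<Sum>i\<in>{1..n}. (\<sigma>m (X i) * heavy_in_weight E attr \<phi> m n i \<omega>) powr p)
      = (\<Sum>i\<in>{1..n}. (\<Sum>j\<in>T. \<sigma>m (X i) * \<phi> (X j) * real (E n j i \<omega>)) powr p)"
    unfolding heavy_in_weight_def T_def X_def sum.inter_filter[OF finite_atLeastAtMost, symmetric]
    by (simp add: sum_distrib_left mult_ac)
  also have "\<dots> \<le> K powr p * real (card T)"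
    using \<sigma>m \<phi> by (intro opnorm_p_sum_powr_le[OF p op[folded X_def] K]) (auto simp: T_def)
  also have "real (card T) = (\<Sum>j\<in>{1..n}. indicator {x. real m < \<phi> x} (X j))"
    unfolding T_def by (simp add: indicator_def sum.If_cases Int_def)
  also have "K powr p * \<dots> \<le> (\<Sum>j\<in>{1..n}. K powr p * (real m + 1) * rho (X j) (Y j)
      + K powr p * indicator (tail_nbhd \<phi> m) (Y j))"
    unfolding sum_distrib_left by (intro sum_mono) (simp add: indicator_le_rho_tail_nbhd mult_left_mono
        distrib_left[symmetric] mult.assoc)
  finally have real_bound: "(\<Sum>i\<in>{1..n}. (\<sigma>m (X i) * heavy_in_weight E attr \<phi> m n i \<omega>) powr p)
      \<le> (\<Sum>j\<in>{1..n}. K powr p * (real m + 1) * rho (X j) (Y j) + K powr p * indicator (tail_nbhd \<phi> m) (Y j))" .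
  have nonneg: "0 \<le> K powr p * (real m + 1) * rho (X j) (Y j)" "0 \<le> K powr p * indicator (tail_nbhd \<phi> m) (Y j)"
    for j using rho_nonneg[of "X j" "Y j"] by auto
  have "(\<Sum>i\<in>{1..n}. ennreal ((\<sigma>m (X i) * heavy_in_weight E attr \<phi> m n i \<omega>) powr p))
      \<le> ennreal (\<Sum>j\<in>{1..n}. K powr p * (real m + 1) * rho (X j) (Y j) + K powr p * indicator (tail_nbhd \<phi> m) (Y j))"
    using real_bound by (simp add: sum_ennreal ennreal_leI)
  also have "\<dots> = (\<Sum>j\<in>{1..n}. ennreal (K powr p * (real m + 1) * rho (X j) (Y j))
      + ennreal (K powr p * indicator (tail_nbhd \<phi> m) (Y j)))"
    using nonneg by (simp add: sum_ennreal[symmetric] add_nonneg_nonneg)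
  finally show ?thesis unfolding X_def using K by (simp add: ennreal_mult' ennreal_indicator)
qed

lemma truncated_in_weight_powr_le:
  assumes p: "0 < p" and \<sigma>m: "\<And>x. 0 \<le> \<sigma>m x" and \<phi>: "\<And>x. 0 \<le> \<phi> x" and A: "0 \<le> A"
    and J: "0 \<le> J" "J \<le> J'" "J' = 0 \<or> J' = 1"
  shows "ennreal ((J * \<sigma>m (gmark E attr n i \<omega>) * in_weight E attr \<phi> n i \<omega>) powr p)
    \<le> ennreal (2 powr p * m powr p * A powr p) * ennreal J'
      + ennreal (2 powr p * m powr p) * tail_steps p A (\<sigma>m (gmark E attr n i \<omega>) * real (fst (gmark E attr n i \<omega>)))
      + ennreal (2 powr p) * ennreal ((\<sigma>m (gmark E attr n i \<omega>) * heavy_in_weight E attr \<phi> m n i \<omega>) powr p)"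
proof -
  define X where "X = gmark E attr n i \<omega>"
  define f h where "f = \<sigma>m X * real (fst X)" and "h = \<sigma>m X * heavy_in_weight E attr \<phi> m n i \<omega>"
  have f0: "0 \<le> f" unfolding f_def using \<sigma>m by simp
  have h0: "0 \<le> h" unfolding h_def heavy_in_weight_def using \<sigma>m \<phi> by (intro mult_nonneg_nonneg sum_nonneg) auto
  have w0: "0 \<le> \<sigma>m X * in_weight E attr \<phi> n i \<omega>"
    unfolding in_weight_def using \<sigma>m \<phi> by (intro mult_nonneg_nonneg sum_nonneg) auto
  have "\<sigma>m X * in_weight E attr \<phi> n i \<omega> \<le> real m * f + h"
    using mult_left_mono[OF in_weight_le[where \<phi>=\<phi> and E=E and attr=attr and n=n and i=i and \<omega>=\<omega>
        and m=m, OF \<phi>] \<sigma>m[of X]]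
    unfolding f_def h_def X_def by (simp add: algebra_simps)
  hence "(J * (\<sigma>m X * in_weight E attr \<phi> n i \<omega>)) powr p
      \<le> 2 powr p * m powr p * A powr p * J' + 2 powr p * m powr p * (f powr p * indicator {A<..} f)
        + 2 powr p * h powr p"
    using J f0 h0 w0 A by (intro powr_truncation_bound[OF p]) auto
  hence "ennreal ((J * \<sigma>m X * in_weight E attr \<phi> n i \<omega>) powr p)
      \<le> ennreal (2 powr p * m powr p * A powr p * J' + 2 powr p * m powr p * (f powr p * indicator {A<..} f)
        + 2 powr p * h powr p)"
    unfolding mult.assoc by (rule ennreal_leI)
  also have "\<dots> = ennreal (2 powr p * m powr p * A powr p) * ennreal J'
        + ennreal (2 powr p * m powr p) * ennreal (f powr p * indicator {A<..} f)
        + ennreal (2 powr p) * ennreal (h powr p)"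
  proof -
    have "ennreal (a * x + b * y + c * z) = ennreal a * ennreal x + ennreal b * ennreal y + ennreal c * ennreal z"
      if "0 \<le> a" "0 \<le> b" "0 \<le> c" "0 \<le> x" "0 \<le> y" "0 \<le> z" for a b c x y z :: real
      using that by (simp add: ennreal_plus ennreal_mult')
    thus ?thesis using J by auto
  qed
  also have "\<dots> \<le> ennreal (2 powr p * m powr p * A powr p) * ennreal J'
      + ennreal (2 powr p * m powr p) * tail_steps p A f + ennreal (2 powr p) * ennreal (h powr p)"
    using p f0 by (intro add_mono mult_left_mono powr_indicator_le_tail_steps) auto
  finally show ?thesis unfolding f_def h_def X_def .
qed

lemma avg_cond_exp_edge_term_le:
  fixes M :: "'w measure"
    and attr :: "nat \<Rightarrow> nat \<Rightarrow> 'w \<Rightarrow> 'a::{metric_space, second_countable_topology}"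
    and Y :: "nat \<Rightarrow> 'w \<Rightarrow> 'a mark" and P :: "nat \<Rightarrow> 'w \<Rightarrow> bool"
  assumes M: "prob_space M" and attr: "\<And>i. attr n i \<in> borel_measurable M"
    and E: "\<And>j i. E n j i \<in> measurable M (count_space UNIV)" and p: "0 < p"
    and \<sigma>m: "\<sigma>m \<in> borel_measurable borel" "\<And>x. 0 \<le> \<sigma>m x"
    and \<phi>: "\<phi> \<in> borel_measurable borel" "\<And>x. 0 \<le> \<phi> x" and K: "0 \<le> K"
    and op: "AE \<omega> in M. opnorm_p p n
      (\<lambda>i j. \<sigma>m (gmark E attr n i \<omega>) * \<phi> (gmark E attr n j \<omega>) * real (E n j i \<omega>)) \<le> ennreal K"
    and Y: "\<And>i. Y i \<in> borel_measurable M" and A: "0 \<le> A"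
  defines "f \<equiv> \<lambda>i \<omega>. \<sigma>m (gmark E attr n i \<omega>) * real (fst (gmark E attr n i \<omega>))"
    and "avg \<equiv> avg_cond_exp M (Fn M attr n) n"
  shows "AE \<omega> in M. avg (\<lambda>i \<omega>. ennreal (((if P i \<omega> then 0 else 1)
        * \<sigma>m (gmark E attr n i \<omega>) * in_weight E attr \<phi> n i \<omega>) powr p)) \<omega>
    \<le> ennreal (2 powr p * m powr p * A powr p) * avg (\<lambda>i \<omega>. ennreal (compl_indicator M {\<omega>\<in>space M. P i \<omega>} \<omega>)) \<omega>
      + ennreal (2 powr p * m powr p) * avg (\<lambda>i \<omega>. tail_steps p A (f i \<omega>)) \<omega>
      + ennreal (2 powr p * K powr p * (real m + 1)) * avg (\<lambda>i \<omega>. ennreal (rho (gmark E attr n i \<omega>) (Y i \<omega>))) \<omega>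
      + ennreal (2 powr p * K powr p) * avg (\<lambda>i \<omega>. indicator (tail_nbhd \<phi> m) (Y i \<omega>)) \<omega>"
proof -
  interpret finite_measure_subalgebra M "Fn M attr n"
    by (rule finite_measure_subalgebraI[OF M subalgebra_Fn[of attr n M, OF attr]])
  define J where "J i \<omega> = ennreal (compl_indicator M {\<omega>\<in>space M. P i \<omega>} \<omega>)" for i \<omega>
  define T where "T i \<omega> = tail_steps p A (f i \<omega>)" for i \<omega>
  define H where "H i \<omega> = ennreal ((\<sigma>m (gmark E attr n i \<omega>) * heavy_in_weight E attr \<phi> m n i \<omega>) powr p)" for i \<omega>
  define R where "R i \<omega> = ennreal (rho (gmark E attr n i \<omega>) (Y i \<omega>))" for i \<omega>
  define N where "N i \<omega> = (indicator (tail_nbhd \<phi> m) (Y i \<omega>) :: ennreal)" for i \<omega>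
  define a b c d where "a = 2 powr p * m powr p * A powr p" and "b = 2 powr p * m powr p"
    and "c = (2::real) powr p" and "d = K powr p"
  have [measurable]: "gmark E attr n i \<in> borel_measurable M" for i using attr E by measurable
  have [measurable]: "(\<lambda>\<omega>. real (E n j i \<omega>)) \<in> borel_measurable M" for i j
    by (rule measurable_compose[OF E borel_measurable_count_space])
  note [measurable] = \<sigma>m(1) \<phi>(1) Y
  have [measurable]: "J i \<in> borel_measurable M" for i unfolding J_def by measurable
  have [measurable]: "T i \<in> borel_measurable M" for i unfolding T_def f_def by measurable
  have H_meas[measurable]: "H i \<in> borel_measurable M" for i unfolding H_def heavy_in_weight_def by measurable
  have R_meas[measurable]: "R i \<in> borel_measurable M" for i unfolding R_def by measurable
  have N_meas[measurable]: "N i \<in> borel_measurable M" for i unfolding N_def by measurable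
  have "ennreal (((if P i \<omega> then 0 else 1) * \<sigma>m (gmark E attr n i \<omega>) * in_weight E attr \<phi> n i \<omega>) powr p)
      \<le> ennreal a * J i \<omega> + ennreal b * T i \<omega> + ennreal c * H i \<omega>" if "\<omega> \<in> space M" for i \<omega>
    unfolding a_def b_def c_def J_def T_def H_def f_def
    using that compl_indicator_cases(1)[of \<omega> M "{\<omega> \<in> space M. P i \<omega>}"]
      compl_indicator_cases(2)[of M "{\<omega> \<in> space M. P i \<omega>}" \<omega>] p \<sigma>m(2) \<phi>(2) A
    by (intro truncated_in_weight_powr_le) auto
  hence "AE \<omega> in M. avg (\<lambda>i \<omega>. ennreal (((if P i \<omega> then 0 else 1) * \<sigma>m (gmark E attr n i \<omega>)
      * in_weight E attr \<phi> n i \<omega>) powr p)) \<omega> \<le> avg (\<lambda>i \<omega>. ennreal a * J i \<omega> + ennreal b * T i \<omega> + ennreal c * H i \<omega>) \<omega>"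
    unfolding avg_def by (intro avg_cond_exp_mono) auto
  moreover have "AE \<omega> in M. avg H \<omega> \<le> avg (\<lambda>i \<omega>. ennreal (d * (real m + 1)) * R i \<omega> + ennreal d * N i \<omega>) \<omega>"
    unfolding avg_def
  proof (rule avg_cond_exp_mono_sum[OF _ H_meas])
    show "AE \<omega> in M. (\<Sum>i\<in>{1..n}. H i \<omega>) \<le> (\<Sum>i\<in>{1..n}. ennreal (d * (real m + 1)) * R i \<omega> + ennreal d * N i \<omega>)"
      using op unfolding H_def R_def N_def d_def
      by eventually_elim (rule sum_heavy_in_weight_le[OF p K \<sigma>m(2) \<phi>(2)])
  qed measurable
  moreover have "AE \<omega> in M. avg (\<lambda>i \<omega>. ennreal a * J i \<omega> + ennreal b * T i \<omega> + ennreal c * H i \<omega>) \<omega>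
      = ennreal a * avg J \<omega> + ennreal b * avg T \<omega> + ennreal c * avg H \<omega>"
    "AE \<omega> in M. avg (\<lambda>i \<omega>. ennreal (d * (real m + 1)) * R i \<omega> + ennreal d * N i \<omega>) \<omega>
      = ennreal (d * (real m + 1)) * avg R \<omega> + ennreal d * avg N \<omega>"
    unfolding avg_def by (rule avg_cond_exp_lin3 avg_cond_exp_lin2; measurable)+
  ultimately show ?thesis
  proof eventually_elim
    case (elim \<omega>)
    have "ennreal c * avg H \<omega> \<le> ennreal c * (ennreal (d * (real m + 1)) * avg R \<omega> + ennreal d * avg N \<omega>)"
      using elim(2,4) by (intro mult_left_mono) auto
    also have "\<dots> = ennreal (c * d * (real m + 1)) * avg R \<omega> + ennreal (c * d) * avg N \<omega>"
    proof -
      have "ennreal (c * d * (real m + 1)) = ennreal c * ennreal (d * (real m + 1))"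
        "ennreal (c * d) = ennreal c * ennreal d"
        unfolding c_def d_def by (simp_all add: ennreal_mult' mult.assoc)
      thus ?thesis by (simp only: distrib_left mult.assoc)
    qed
    finally have "ennreal a * avg J \<omega> + ennreal b * avg T \<omega> + ennreal c * avg H \<omega>
        \<le> ennreal a * avg J \<omega> + ennreal b * avg T \<omega> + (ennreal (c * d * (real m + 1)) * avg R \<omega> + ennreal (c * d) * avg N \<omega>)"
      by (rule add_left_mono)
    with elim(1)[unfolded elim(3)] have "avg (\<lambda>i \<omega>. ennreal (((if P i \<omega> then 0 else 1) * \<sigma>m (gmark E attr n i \<omega>)
        * in_weight E attr \<phi> n i \<omega>) powr p)) \<omega>
        \<le> ennreal a * avg J \<omega> + ennreal b * avg T \<omega> + (ennreal (c * d * (real m + 1)) * avg R \<omega> + ennreal (c * d) * avg N \<omega>)"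
      by (rule order_trans)
    thus ?case unfolding J_def[abs_def] T_def[abs_def] R_def[abs_def] N_def[abs_def] a_def b_def c_def d_def
      by (simp only: add.assoc)
  qed
qed

section \<open>Convergence of the edge terms\<close>

lemma (in sigma_finite_subalgebra) nn_integral_avg_cond_exp_indicator:
  assumes n: "1 \<le> n" and X: "\<And>i. X i \<in> measurable M N" "\<And>i. distr M N (X i) = \<mu>" and S: "S \<in> sets N"
  shows "(\<integral>\<^sup>+ \<omega>. avg_cond_exp M F n (\<lambda>i \<omega>. indicator S (X i \<omega>)) \<omega> \<partial>M) = emeasure \<mu> S"
proof (rule avg_cond_exp_nn_integral[OF n])
  fix i
  have "(\<integral>\<^sup>+ \<omega>. indicator S (X i \<omega>) \<partial>M) = (\<integral>\<^sup>+ x. indicator S x \<partial>distr M N (X i))"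
    by (rule nn_integral_distr[symmetric, OF X(1)]) (use S in measurable)
  also have "\<dots> = emeasure \<mu> S" unfolding X(2) using S X(2) by (metis nn_integral_indicator sets_distr)
  finally show "(\<integral>\<^sup>+ \<omega>. indicator S (X i \<omega>) \<partial>M) = emeasure \<mu> S" .
qed (use X(1) S in measurable)

text \<open>In the application \<open>\<phi>\<close> is \<open>\<sigma>\<^sub>+\<close> or \<open>|g(0,\<cdot>)|\<close>, and \<open>P n i\<close> is the event that the strong coupling
  succeeds at vertex \<open>i\<close>.\<close>
locale edge_term_setting =
  fixes M :: "'w measure"
    and attr :: "nat \<Rightarrow> nat \<Rightarrow> 'w \<Rightarrow> 'a::{metric_space, second_countable_topology}"
    and E :: "nat \<Rightarrow> nat \<Rightarrow> nat \<Rightarrow> 'w \<Rightarrow> nat" and p :: real and \<sigma>m \<phi> :: "'a mark \<Rightarrow> real" and K :: real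
    and Xt :: "nat \<Rightarrow> nat \<Rightarrow> nat list \<Rightarrow> 'w \<Rightarrow> 'a mark" and \<mu>r :: "'a mark measure"
    and P :: "nat \<Rightarrow> nat \<Rightarrow> 'w \<Rightarrow> bool"
  assumes M: "prob_space M" and attr: "\<And>n i. attr n i \<in> borel_measurable M"
    and E: "\<And>n j i. E n j i \<in> measurable M (count_space UNIV)" and p: "0 < p"
    and \<sigma>m: "\<sigma>m \<in> borel_measurable borel" "\<And>x. 0 \<le> \<sigma>m x"
    and \<phi>: "\<phi> \<in> borel_measurable borel" "\<And>x. 0 \<le> \<phi> x" "rho_locally_bounded \<phi>"
    and op: "AE \<omega> in M. \<forall>n. opnorm_p p n
      (\<lambda>i j. \<sigma>m (gmark E attr n i \<omega>) * \<phi> (gmark E attr n j \<omega>) * real (E n j i \<omega>)) \<le> ennreal K"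
    and Xt: "\<And>n i. Xt n i [] \<in> borel_measurable M" "\<And>n i. distr M borel (Xt n i []) = \<mu>r"
    and roots: "conv_prob_enn0 M (\<lambda>n \<omega>. avg_cond_exp M (Fn M attr n) n
      (\<lambda>i \<omega>. ennreal (rho (gmark E attr n i \<omega>) (Xt n i [] \<omega>))) \<omega>)"
    and good: "conv_prob M (\<lambda>n \<omega>. (1 / real n)
      * (\<Sum>i\<in>{1..n}. real_cond_exp M (Fn M attr n) (indicator {\<omega>\<in>space M. P n i \<omega>}) \<omega>)) 1"
    and moment: "(\<integral>\<^sup>+ x. ennreal ((\<sigma>m x * real (fst x)) powr p) \<partial>\<mu>r) < \<infinity>"
    and dp: "dp_conv M (Fn M attr) p (\<lambda>n i \<omega>. \<sigma>m (gmark E attr n i \<omega>) * real (fst (gmark E attr n i \<omega>)))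
      (distr \<mu>r borel (\<lambda>x. \<sigma>m x * real (fst x)))"
begin

abbreviation "avg n \<equiv> avg_cond_exp M (Fn M attr n) n"

abbreviation "fstar n i \<omega> \<equiv> \<sigma>m (gmark E attr n i \<omega>) * real (fst (gmark E attr n i \<omega>))"

abbreviation "limit_law \<equiv> distr \<mu>r borel (\<lambda>x. \<sigma>m x * real (fst x))"

abbreviation "good_fraction n \<omega> \<equiv>
  (1 / real n) * (\<Sum>i\<in>{1..n}. real_cond_exp M (Fn M attr n) (indicator {\<omega>\<in>space M. P n i \<omega>}) \<omega>)"

abbreviation "edge_power n i \<omega> \<equiv>
  ennreal (((if P n i \<omega> then 0 else 1) * \<sigma>m (gmark E attr n i \<omega>) * in_weight E attr \<phi> n i \<omega>) powr p)"

declare \<sigma>m(1)[measurable] \<phi>(1)[measurable] Xt(1)[measurable]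

lemma finite_measure_subalgebra_Fn: "finite_measure_subalgebra M (Fn M attr n)"
  by (rule finite_measure_subalgebraI[OF M subalgebra_Fn[of attr n M, OF attr]])

lemma measurable_gmark[measurable]: "gmark E attr n i \<in> borel_measurable M"
  using attr E by measurable

lemma fstar_measurable: "fstar n i \<in> borel_measurable M"
  by measurable

lemma root_law: "prob_space \<mu>r" "sets \<mu>r = sets borel"
  using prob_space.prob_space_distr[OF M Xt(1)] Xt(2) by (metis sets_distr)+

lemma tail_moment_limit_law: "(\<lambda>a::nat. tail_moment p limit_law (real a)) \<longlonglongrightarrow> 0"
proof (intro tail_moment_tendsto_0 nn_integral_succ_powr_distr_finite[OF root_law(1) _ _ moment p])
  show "(\<lambda>x. \<sigma>m x * real (fst x)) \<in> borel_measurable \<mu>r"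
    unfolding measurable_cong_sets[OF root_law(2) refl] by measurable
qed (use \<sigma>m(2) in auto)

lemma emeasure_root_tail_nbhd: "(\<lambda>m. emeasure \<mu>r (tail_nbhd \<phi> m)) \<longlonglongrightarrow> 0"
  using root_law \<phi>(3) by (intro emeasure_tail_nbhd_tendsto_0) (auto simp: prob_space_def)

lemma avg_edge_power_le:
  fixes m :: nat and A :: real
  assumes n: "1 \<le> n" and \<kappa>: "cond_law_mix M (Fn M attr n) n (fstar n) \<kappa>" and A: "2 \<le> A"
  defines "b \<equiv> 2 powr p * real m powr p" and "d \<equiv> 2 powr p * max 0 K powr p"
  shows "AE \<omega> in M. avg n (edge_power n) \<omega>
    \<le> ennreal (b * A powr p) * ennreal \<bar>good_fraction n \<omega> - 1\<bar>
      + ennreal b * (ennreal (2 powr p * (1 + 2 powr p)) * transport_cost p (\<kappa> \<omega>) limit_law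
          + ennreal (2 powr p) * tail_moment p limit_law A)
      + ennreal (d * (real m + 1)) * avg n (\<lambda>i \<omega>. ennreal (rho (gmark E attr n i \<omega>) (Xt n i [] \<omega>))) \<omega>
      + ennreal d * avg n (\<lambda>i \<omega>. indicator (tail_nbhd \<phi> m) (Xt n i [] \<omega>)) \<omega>"
proof -
  interpret finite_measure_subalgebra M "Fn M attr n" by (rule finite_measure_subalgebra_Fn)
  have "AE \<omega> in M. opnorm_p p n
      (\<lambda>i j. \<sigma>m (gmark E attr n i \<omega>) * \<phi> (gmark E attr n j \<omega>) * real (E n j i \<omega>)) \<le> ennreal (max 0 K)"
    using op by eventually_elim (simp add: ennreal_max_0)
  moreover have "0 \<le> max 0 K" "0 \<le> A" using A by auto
  ultimately have edge: "AE \<omega> in M. avg n (edge_power n) \<omega>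
    \<le> ennreal (b * A powr p) * avg n (\<lambda>i \<omega>. ennreal (compl_indicator M {\<omega>\<in>space M. P n i \<omega>} \<omega>)) \<omega>
      + ennreal b * avg n (\<lambda>i \<omega>. tail_steps p A (fstar n i \<omega>)) \<omega>
      + ennreal (d * (real m + 1)) * avg n (\<lambda>i \<omega>. ennreal (rho (gmark E attr n i \<omega>) (Xt n i [] \<omega>))) \<omega>
      + ennreal d * avg n (\<lambda>i \<omega>. indicator (tail_nbhd \<phi> m) (Xt n i [] \<omega>)) \<omega>"
    unfolding b_def d_def using attr E p \<sigma>m \<phi> Xt(1)
    by (intro avg_cond_exp_edge_term_le[where P="P n" and m=m and Y="\<lambda>i. Xt n i []", OF M]) auto
  have "AE \<omega> in M. avg n (\<lambda>i \<omega>. ennreal (compl_indicator M {\<omega>\<in>space M. P n i \<omega>} \<omega>)) \<omega>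
      = ennreal \<bar>good_fraction n \<omega> - 1\<bar>"
    using n by (intro avg_cond_exp_compl_indicator) auto
  moreover have "AE \<omega> in M. avg n (\<lambda>i \<omega>. tail_steps p A (fstar n i \<omega>)) \<omega>
      \<le> ennreal (2 powr p * (1 + 2 powr p)) * transport_cost p (\<kappa> \<omega>) limit_law
        + ennreal (2 powr p) * tail_moment p limit_law A"
    using \<kappa> fstar_measurable p A by (intro avg_cond_exp_tail_steps_le) auto
  ultimately show ?thesis using edge
  proof eventually_elim
    case (elim \<omega>)
    from elim(3)[unfolded elim(1)] show ?case
      by (rule order_trans) (intro add_mono mult_left_mono elim(2) order_refl zero_le)
  qed
qed

lemma avg_edge_power_approx:
  assumes \<epsilon>: "0 < \<epsilon>"
  shows "\<exists>Y W. conv_prob_enn0 M Y \<and> (\<forall>n. W n \<in> borel_measurable M \<and> (\<integral>\<^sup>+ \<omega>. W n \<omega> \<partial>M) \<le> ennreal \<epsilon>)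
    \<and> (\<forall>\<^sub>F n in sequentially. AE \<omega> in M. avg n (edge_power n) \<omega> \<le> Y n \<omega> + W n \<omega> + ennreal \<epsilon>)"
proof -
  obtain \<kappa> where \<kappa>: "\<And>n. 1 \<le> n \<Longrightarrow> cond_law_mix M (Fn M attr n) n (fstar n) (\<kappa> n)"
    and cost: "conv_prob_enn0 M (\<lambda>n \<omega>. transport_cost p (\<kappa> n \<omega>) limit_law)"
    using dp_conv_transport_cost[OF dp p] by blast
  define d where "d = 2 powr p * max 0 K powr p"
  obtain m where m: "ennreal d * emeasure \<mu>r (tail_nbhd \<phi> m) \<le> ennreal \<epsilon>"
    using ennreal_tendsto_0_cmult_le[OF emeasure_root_tail_nbhd \<epsilon>] by (meson order_refl)
  define b where "b = 2 powr p * real m powr p"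
  have "(\<lambda>a. ennreal (2 powr p) * tail_moment p limit_law (real a)) \<longlonglongrightarrow> 0"
    using ennreal_tendsto_cmult[OF _ tail_moment_limit_law, of "ennreal (2 powr p)"] by simp
  then obtain N where "\<And>a. N \<le> a \<Longrightarrow> ennreal b * (ennreal (2 powr p) * tail_moment p limit_law (real a)) \<le> ennreal \<epsilon>"
    using ennreal_tendsto_0_cmult_le[OF _ \<epsilon>] by blast
  from this[of "N + 2"] have A: "2 \<le> real (N + 2)"
    "ennreal b * (ennreal (2 powr p) * tail_moment p limit_law (real (N + 2))) \<le> ennreal \<epsilon>"
    by auto
  define A where "A = real (N + 2)"
  define Y where "Y n \<omega> = ennreal (b * A powr p) * ennreal \<bar>good_fraction n \<omega> - 1\<bar>
      + ennreal b * (ennreal (2 powr p * (1 + 2 powr p)) * transport_cost p (\<kappa> n \<omega>) limit_law)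
      + ennreal (d * (real m + 1)) * avg n (\<lambda>i \<omega>. ennreal (rho (gmark E attr n i \<omega>) (Xt n i [] \<omega>))) \<omega>"
    for n \<omega>
  define W where "W n \<omega> = ennreal d * avg n (\<lambda>i \<omega>. indicator (tail_nbhd \<phi> m) (Xt n i [] \<omega>)) \<omega>" for n \<omega>
  have "conv_prob_enn0 M Y"
    unfolding Y_def using conv_prob_enn0_abs_diff[OF good] cost roots M
    by (intro conv_prob_enn0_add conv_prob_enn0_cmult) (auto simp: b_def d_def prob_space_def)
  moreover have "W n \<in> borel_measurable M" for n unfolding W_def by measurable
  moreover have "(\<integral>\<^sup>+ \<omega>. W n \<omega> \<partial>M) \<le> ennreal \<epsilon>" for n
  proof (cases "n = 0")
    case False
    interpret finite_measure_subalgebra M "Fn M attr n" by (rule finite_measure_subalgebra_Fn)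
    have "(\<integral>\<^sup>+ \<omega>. W n \<omega> \<partial>M) = ennreal d * emeasure \<mu>r (tail_nbhd \<phi> m)"
      unfolding W_def using False Xt
      by (subst nn_integral_cmult, measurable, subst nn_integral_avg_cond_exp_indicator) auto
    with m show ?thesis by simp
  qed (simp add: W_def avg_cond_exp_def)
  moreover have "AE \<omega> in M. avg n (edge_power n) \<omega> \<le> Y n \<omega> + W n \<omega> + ennreal \<epsilon>" if n: "1 \<le> n" for n
    using avg_edge_power_le[OF n \<kappa>[OF n] A(1), of m] unfolding A_def[symmetric]
  proof eventually_elim
    case (elim \<omega>)
    have "avg n (edge_power n) \<omega> \<le> Y n \<omega> + W n \<omega> + ennreal b * (ennreal (2 powr p) * tail_moment p limit_law A)"
      using elim unfolding Y_def W_def b_def d_def by (simp add: distrib_left add_ac)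
    also have "\<dots> \<le> Y n \<omega> + W n \<omega> + ennreal \<epsilon>" using A(2) unfolding A_def by (intro add_left_mono)
    finally show ?case .
  qed
  ultimately show ?thesis unfolding eventually_sequentially by blast
qed

theorem conv_prob_enn0_avg_edge_power:
  "conv_prob_enn0 M (\<lambda>n \<omega>. enn_root p (avg n (edge_power n) \<omega>))"
  unfolding conv_prob_enn0_enn_root_iff[OF p]
  using M avg_edge_power_approx by (intro conv_prob_enn0_approx) (auto simp: prob_space_def)

end

lemma borel_measurable_section:
  fixes g :: "'a::topological_space \<Rightarrow> 'b::topological_space \<Rightarrow> 'c::topological_space"
  assumes "(\<lambda>(r, x). g r x) \<in> borel_measurable borel"
  shows "g r \<in> borel_measurable borel"
proof -
  have "(\<lambda>x. (r, x)) \<in> borel_measurable borel" by (intro borel_measurable_continuous_onI continuous_intros)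
  from measurable_compose[OF this assms] show ?thesis by (simp add: comp_def)
qed

theorem lemmaL:
  fixes M :: "'w measure"
    and attr :: "nat \<Rightarrow> nat \<Rightarrow> 'w \<Rightarrow> 'a::{metric_space, second_countable_topology}"
    and E :: "nat \<Rightarrow> nat \<Rightarrow> nat \<Rightarrow> 'w \<Rightarrow> nat"
    and p :: real
    and g :: "real \<Rightarrow> 'a mark \<Rightarrow> real"
    and \<Phi> :: "'a mark \<Rightarrow> 'z \<Rightarrow> (real \<times> 'x) list \<Rightarrow> real"
    and Z :: "'z measure" and Xi :: "'x measure"
    and \<sigma>m \<sigma>p \<beta> :: "'a mark \<Rightarrow> real"
    and K K0 H Q \<alpha> \<gamma> :: real
    and \<mu>r \<mu> :: "'a mark measure"
    and Xt :: "nat \<Rightarrow> nat \<Rightarrow> nat list \<Rightarrow> 'w \<Rightarrow> 'a mark"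
    and \<theta> :: "nat \<Rightarrow> nat \<Rightarrow> nat list \<Rightarrow> 'w \<Rightarrow> nat"
    and k :: nat and \<epsilon> :: real
  assumes M: "prob_space M"
    and attr_meas: "\<And>n i. attr n i \<in> borel_measurable M"
    and E_meas: "\<And>n j i. E n j i \<in> measurable M (count_space UNIV)"
    and p: "1 \<le> p"
    (* generic noise vector: zeta ~ Z, xi_j ~ Xi, independent (product measure) *)
    and Z: "prob_space Z" and Xi: "prob_space Xi"
    and g_meas: "(\<lambda>(r, x). g r x) \<in> borel_measurable borel"
    and Phi_meas: "\<And>x d v. (\<lambda>z. Phi_app \<Phi> x d v (fst z) (snd z))
                      \<in> borel_measurable (Z \<Otimes>\<^sub>M PiM {..<d} (\<lambda>_. Xi))"
    (* Assumption R *)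
    and \<sigma>m_cont: "continuous_on UNIV \<sigma>m" and \<sigma>m_nonneg: "\<And>x. 0 \<le> \<sigma>m x"
    and \<sigma>p_cont: "continuous_on UNIV \<sigma>p" and \<sigma>p_nonneg: "\<And>x. 0 \<le> \<sigma>p x"
    and \<beta>_cont: "continuous_on UNIV \<beta>" and \<beta>_nonneg: "\<And>x. 0 \<le> \<beta> x"
    and R1: "\<And>x v w. noise_Lp Z Xi (fst x) p
               (\<lambda>z xs. Phi_app \<Phi> x (fst x) v z xs - Phi_app \<Phi> x (fst x) w z xs)
             \<le> ennreal (\<sigma>m x * (\<Sum>j<fst x. \<bar>v j - w j\<bar>))"
    and R2: "\<And>x r r'. \<bar>g r x - g r' x\<bar> \<le> \<sigma>p x * \<bar>r - r'\<bar>"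
    and R3: "\<And>x v. noise_Lp Z Xi (fst x) p (Phi_app \<Phi> x (fst x) v)
             \<le> ennreal (\<sigma>m x * (\<Sum>j<fst x. \<bar>v j\<bar>) + \<beta> x)"
    and R4: "AE \<omega> in M. \<forall>n.
               opnorm_p p n (\<lambda>i j. \<sigma>m (gmark E attr n i \<omega>) * \<sigma>p (gmark E attr n j \<omega>) * real (E n j i \<omega>))
                 \<le> ennreal K \<and>
               opnorm_p p n (\<lambda>i j. \<sigma>m (gmark E attr n i \<omega>) * \<bar>g 0 (gmark E attr n j \<omega>)\<bar> * real (E n j i \<omega>))
                 \<le> ennreal K0"
    and HQ: "0 < H" "0 < Q" "0 < \<alpha>" "0 < \<gamma>"
    and R5: "\<And>x y v r e. 0 < e \<Longrightarrow> e < 1 \<Longrightarrow> rho x y \<le> e \<Longrightarrow>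
               noise_Lp Z Xi (fst x) p
                 (\<lambda>z xs. Phi_app \<Phi> x (fst x) v z xs - Phi_app \<Phi> y (fst x) v z xs)
               \<le> ennreal (H * max 1 (\<sigma>m x * (\<Sum>j<fst x. \<bar>v j\<bar>) + \<beta> x) * rho x y powr \<alpha>)
             \<and> \<bar>g r x - g r y\<bar> \<le> Q * max 1 (\<sigma>p x * \<bar>r\<bar>) * rho x y powr \<gamma>"
    (* strong coupling: delayed marked Galton-Watson trees, law independent of n *)
    and tree_indep: "\<And>n i. prob_space.indep_vars M (\<lambda>_. borel) (Xt n i) ulam"
    and tree_root_law: "\<And>n i. distr M borel (Xt n i []) = \<mu>r"
    and tree_law: "\<And>n i u. u \<in> ulam \<Longrightarrow> u \<noteq> [] \<Longrightarrow> distr M borel (Xt n i u) = \<mu>"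
    and theta_meas: "\<And>n i u. \<theta> n i u \<in> measurable M (count_space UNIV)"
    and SC1: "\<And>k'. 1 \<le> k' \<Longrightarrow> conv_prob M (\<lambda>n \<omega>. (1 / real n) * (\<Sum>i\<in>{1..n}.
               real_cond_exp M (Fn M attr n)
                 (indicator {\<omega>\<in>space M. \<not> iso_event E n k' i (Xt n i) (\<theta> n i) \<omega>}) \<omega>)) 0"
    and SC2: "conv_prob_enn0 M (\<lambda>n \<omega>. ennreal (1 / real n) * (\<Sum>i\<in>{1..n}.
               nn_cond_exp M (Fn M attr n)
                 (\<lambda>\<omega>. ennreal (rho (gmark E attr n i \<omega>) (Xt n i [] \<omega>))) \<omega>))"
    and SC3: "\<And>k' e. 1 \<le> k' \<Longrightarrow> 0 < e \<Longrightarrow> e < 1 \<Longrightarrow>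
               conv_prob M (\<lambda>n \<omega>. (1 / real n) * (\<Sum>i\<in>{1..n}.
               real_cond_exp M (Fn M attr n)
                 (indicator {\<omega>\<in>space M. F_event E attr n k' e i (Xt n i) (\<theta> n i) \<omega>}) \<omega>)) 1"
    (* Assumption G: moments and d_p convergence *)
    and G1: "(\<integral>\<^sup>+ x. ennreal ((real (fst x) * \<sigma>m x) powr p + \<beta> x powr p) \<partial>\<mu>r) < \<infinity>"
    and G2: "(\<integral>\<^sup>+ x. ennreal ((real (fst x) * \<sigma>m x * \<sigma>p x) powr p + (\<sigma>p x * \<beta> x) powr p
               + \<sigma>p x powr p + \<bar>g 0 x\<bar> powr p) \<partial>\<mu>) < \<infinity>"
    and G3: "dp_conv M (Fn M attr) p (\<lambda>n i \<omega>. \<sigma>m (gmark E attr n i \<omega>) * real (fst (gmark E attr n i \<omega>)))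
               (distr \<mu>r borel (\<lambda>x. \<sigma>m x * real (fst x)))"
    and G4: "dp_conv M (Fn M attr) p (\<lambda>n i \<omega>. \<beta> (gmark E attr n i \<omega>)) (distr \<mu>r borel \<beta>)"
    (* the fixed k and epsilon *)
    and k: "1 \<le> k" and \<epsilon>: "0 < \<epsilon>" "\<epsilon> < 1"
  shows "conv_prob_enn0 M (\<lambda>n \<omega>.
      enn_root p (ennreal (1 / real n) * (\<Sum>i\<in>{1..n}. nn_cond_exp M (Fn M attr n)
         (\<lambda>\<omega>. ennreal (((if F_event E attr n k \<epsilon> i (Xt n i) (\<theta> n i) \<omega> then 0 else 1)
             * \<sigma>m (gmark E attr n i \<omega>)
             * (\<Sum>j\<in>{1..n}. real (E n j i \<omega>) * \<sigma>p (gmark E attr n j \<omega>))) powr p)) \<omega>))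
    + enn_root p (ennreal (1 / real n) * (\<Sum>i\<in>{1..n}. nn_cond_exp M (Fn M attr n)
         (\<lambda>\<omega>. ennreal (((if F_event E attr n k \<epsilon> i (Xt n i) (\<theta> n i) \<omega> then 0 else 1)
             * \<sigma>m (gmark E attr n i \<omega>)
             * (\<Sum>j\<in>{1..n}. real (E n j i \<omega>) * \<bar>g 0 (gmark E attr n j \<omega>)\<bar>)) powr p)) \<omega>)))"
proof -
  have common: "prob_space M" "\<And>n i. attr n i \<in> borel_measurable M"
    "\<And>n j i. E n j i \<in> measurable M (count_space UNIV)" "0 < p"
    "\<sigma>m \<in> borel_measurable borel" "\<And>x. 0 \<le> \<sigma>m x"
    "\<And>n i. Xt n i [] \<in> borel_measurable M" "\<And>n i. distr M borel (Xt n i []) = \<mu>r"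
    "conv_prob_enn0 M (\<lambda>n \<omega>. avg_cond_exp M (Fn M attr n) n
      (\<lambda>i \<omega>. ennreal (rho (gmark E attr n i \<omega>) (Xt n i [] \<omega>))) \<omega>)"
    using M attr_meas E_meas p borel_measurable_continuous_onI[OF \<sigma>m_cont] \<sigma>m_nonneg tree_root_law
      tree_indep[unfolded prob_space.indep_vars_def[OF M]] SC2
    by (auto simp: ulam_def avg_cond_exp_def)
  have moment: "(\<integral>\<^sup>+ x. ennreal ((\<sigma>m x * real (fst x)) powr p) \<partial>\<mu>r) < \<infinity>"
    using G1 by (rule le_less_trans[rotated]) (intro nn_integral_mono ennreal_leI, simp add: mult.commute)
  have g0_meas: "(\<lambda>x. \<bar>g 0 x\<bar>) \<in> borel_measurable borel"
    using borel_measurable_section[OF g_meas, of 0] by measurable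
  have g0_bounded: "rho_locally_bounded (\<lambda>x. \<bar>g 0 x\<bar>)"
    using R5[of "1/2" _ _ "\<lambda>_. 0" 0] HQ by (intro rho_locally_bounded_Hoelder[of "1/2" _ Q \<gamma>]) auto
  have op_\<sigma>p: "AE \<omega> in M. \<forall>n. opnorm_p p n
      (\<lambda>i j. \<sigma>m (gmark E attr n i \<omega>) * \<sigma>p (gmark E attr n j \<omega>) * real (E n j i \<omega>)) \<le> ennreal K"
    and op_g0: "AE \<omega> in M. \<forall>n. opnorm_p p n
      (\<lambda>i j. \<sigma>m (gmark E attr n i \<omega>) * \<bar>g 0 (gmark E attr n j \<omega>)\<bar> * real (E n j i \<omega>)) \<le> ennreal K0"
    using R4 by auto
  interpret \<sigma>p: edge_term_setting M attr E p \<sigma>m \<sigma>p K Xt \<mu>r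
      "\<lambda>n i \<omega>. F_event E attr n k \<epsilon> i (Xt n i) (\<theta> n i) \<omega>"
    by (rule edge_term_setting.intro)
      (fact common moment G3 SC3[OF k \<epsilon>] op_\<sigma>p \<sigma>p_nonneg borel_measurable_continuous_onI[OF \<sigma>p_cont]
        rho_locally_bounded_continuous[OF \<sigma>p_cont])+
  interpret g0: edge_term_setting M attr E p \<sigma>m "\<lambda>x. \<bar>g 0 x\<bar>" K0 Xt \<mu>r
      "\<lambda>n i \<omega>. F_event E attr n k \<epsilon> i (Xt n i) (\<theta> n i) \<omega>"
    by (rule edge_term_setting.intro) (fact common moment G3 SC3[OF k \<epsilon>] op_g0 g0_meas abs_ge_zero g0_bounded)+
  show ?thesis
    using conv_prob_enn0_add[OF prob_space.axioms(1)[OF M]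
      \<sigma>p.conv_prob_enn0_avg_edge_power g0.conv_prob_enn0_avg_edge_power]
    unfolding avg_cond_exp_def in_weight_def .
qed

end
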